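(* Let $N\ge2$, let $j\in\{1,\dots,N\}$ be such that $m_j=1$, and let $m_i\ge2$ for all $i\ne j$. Suppose Assumptions A1 and A2 hold, the game has a (finite) Nash equilibrium $\mathbf x^*$, and for each $i\ne j$ and $k\in\{1,\dots,m_i\}$ the interference graph $\mathcal G_I^i$ and the interference-to-$k$ communication graph $\mathcal G_{C_k}^i$ are undirected and connected. (For coalition $j$ the seeking dynamics reduce to $\dot x_{j1}=-d_{j1}\,\partial f_{j1}(\mathbf x)/\partial x_{j1}$.) Then for each pair of positive constants $(\Delta,v)$ there exists $\delta^*(\Delta,v)>0$ such that for each $\delta\in(0,\delta^* )$, every solution of the seeking dynamics with $\|\chi_{-j}(0)\|<\Delta$ satisfies $$\|\chi_{-j}(t)\|\le\phi(\|\chi_{-j}(0)\|,\delta t)+v\quad\text{for all }t\ge0,$$ where $\phi$ is a class-$\mathcal{KL}$ function.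
   Context: Let $N\ge1$ and $m_i\ge1$ ($i=1,\dots,N$) be integers. Agent $j$ of coalition $i$ ($j\in\{1,\dots,m_i\}$) has action $x_{ij}\in\mathbb R$; $\mathbf x_i=(x_{i1},\dots,x_{im_i})^T$, $\mathbf x=(\mathbf x_1^T,\dots,\mathbf x_N^T)^T\in\mathbb R^{M}$ with $M=\sum_i m_i$, and $\mathbf x_{-i}$ denotes $\mathbf x$ with block $\mathbf x_i$ removed. Agent $j$ of coalition $i$ has a local cost $f_{ij}:\mathbb R^M\to\mathbb R$, and coalition $i$ has cost $f_i=\sum_{j=1}^{m_i}f_{ij}$. A Nash equilibrium is $\mathbf x^*$ with $f_i(\mathbf x_i^*,\mathbf x_{-i}^* )\le f_i(\mathbf x_i,\mathbf x_{-i}^* )$ for all $\mathbf x_i\in\mathbb R^{m_i}$ and all $i$. Pseudo-gradient: $\mathcal P(\mathbf x)=((\partial f_1/\partial\mathbf x_1)^T,\dots,(\partial f_N/\partial\mathbf x_N)^T)^T$. Assumption A1: every $f_{ij}$ is $\mathcal C^2$. Assumption A2: $(\mathbf x-\mathbf y)^T(\mathcal P(\mathbf x)-\mathcal P(\mathbf y))>0$ for all distinct $\mathbf x,\mathbf y\in\mathbb R^M$. Interference graph $\mathcal G_I^i$: the undirected graph on vertex set $\{1,\dots,m_i\}$ in which distinct $j,k$ are adjacent iff $f_{ij}$ depends explicitly on $x_{ik}$ or $f_{ik}$ depends explicitly on $x_{ij}$; $\mathcal N_{Ik}^i$ is the neighbor set of $k$ in $\mathcal G_I^i$ and $N_{Ik}^i=|\mathcal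 N_{Ik}^i|$. In particular $\partial f_{ij}/\partial x_{ik}\equiv0$ whenever $j\notin\mathcal N_{Ik}^i\cup\{k\}$. Communication graph $\mathcal G_C^i$: an undirected weighted graph on $\{1,\dots,m_i\}$ with adjacency matrix $(a_i^{jl})$, $a_i^{jl}=a_i^{lj}\ge0$, $a_i^{jj}=0$. The interference-to-$k$ communication graph $\mathcal G_{C_k}^i$ is the subgraph of $\mathcal G_C^i$ induced on the vertex set $\mathcal N_{Ik}^i\cup\{k\}$ (with inherited weights); its Laplacian is $L_{C_k}^i$ and its number of vertices is $N_{C_k^i}=N_{Ik}^i+1$. Seeking dynamics: fix $\delta>0$ and positive constants $\bar d_{ij}$, set $d_{ij}=\delta\bar d_{ij}$. For all $i,j$: $\dot x_{ij}=-d_{ij}\,g_{ijj}$, and for each $k\in\mathcal N_{Ij}^i\cup\{j\}$: $\dot w_{ijk}=-\sum_{l\in\mathcal N_{Ik}^i\cup\{k\}}a_i^{jl}(g_{ijk}-g_{ilk})$, $g_{ijk}=w_{ijk}+\partial f_{ij}(\mathbf x)/\partial x_{ik}$, with initial conditions $w_{ijk}(0)=0$ and $\mathbf x(0)$ arbitrary. Error coordinates: $G_{ik}$ is the vector of $g_{ijk}$ over $j\in\mathcal N_{Ik}^i\cup\{k\}$; $R_{ik}\in\mathbb R^{N_{C_k^i}\times(N_{C_k^i}-1)}$ is any matrix such that $[\mathbf 1_{N_{C_k^i}}/\sqrt{N_{C_k^i}}\ \ R_{ik}]$ is an orthogonal matrix ($\mathbf 1_n$ the all-ones vector); $\bar G_{ik}=R_{ik}^TG_{ik}$.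 $\bar G_{-j}$ is the concatenation of $\bar G_{ik}$ over $i\in\{1,\dots,N\}\setminus\{j\}$, $k\in\{1,\dots,m_i\}$ (in lexicographic order), and $\chi_{-j}(t)=(\bar G_{-j}(t)^T,(\mathbf x(t)-\mathbf x^* )^T)^T$. *)

theory Defs
  imports "HOL-Analysis.Analysis"
begin

text \<open>Agents are the elements of a finite type 'a; c a is the coalition (in 0..<N) of agent a.
  The joint action is x :: real^'a, and f a is the local cost of agent a.\<close>

definition C2_fun :: "(real^'a \<Rightarrow> real) \<Rightarrow> bool" where
  "C2_fun g \<longleftrightarrow> (\<exists>Dg D2g.
     (\<forall>x. (g has_derivative blinfun_apply (Dg x)) (at x)) \<and>
     (\<forall>x. (Dg has_derivative blinfun_apply (D2g x)) (at x)) \<and>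
     continuous_on UNIV D2g)"

definition partial_deriv :: "(real^'a \<Rightarrow> real) \<Rightarrow> 'a \<Rightarrow> real^'a \<Rightarrow> real" where
  "partial_deriv g b x = deriv (\<lambda>s. g (x + s *\<^sub>R axis b 1)) 0"

definition coalition_cost :: "('a \<Rightarrow> real^'a \<Rightarrow> real) \<Rightarrow> ('a \<Rightarrow> nat) \<Rightarrow> nat \<Rightarrow> real^'a \<Rightarrow> real" where
  "coalition_cost f c i x = (\<Sum>a\<in>{a. c a = i}. f a x)"

definition pseudo_gradient :: "('a \<Rightarrow> real^'a \<Rightarrow> real) \<Rightarrow> ('a \<Rightarrow> nat) \<Rightarrow> real^'a \<Rightarrow> real^'a" where
  "pseudo_gradient f c x = (\<chi> a. partial_deriv (coalition_cost f c (c a)) a x)"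

definition is_NE :: "nat \<Rightarrow> ('a \<Rightarrow> real^'a \<Rightarrow> real) \<Rightarrow> ('a \<Rightarrow> nat) \<Rightarrow> real^'a \<Rightarrow> bool" where
  "is_NE N f c xs \<longleftrightarrow> (\<forall>i<N. \<forall>y. (\<forall>a. c a \<noteq> i \<longrightarrow> y $ a = xs $ a) \<longrightarrow>
      coalition_cost f c i xs \<le> coalition_cost f c i y)"

definition depends_on :: "(real^'a \<Rightarrow> real) \<Rightarrow> 'a \<Rightarrow> bool" where
  "depends_on g b \<longleftrightarrow> (\<exists>x y. (\<forall>e. e \<noteq> b \<longrightarrow> x $ e = y $ e) \<and> g x \<noteq> g y)"

definition interf :: "('a \<Rightarrow> real^'a \<Rightarrow> real) \<Rightarrow> ('a \<Rightarrow> nat) \<Rightarrow> 'a \<Rightarrow> 'a \<Rightarrow> bool" where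
  "interf f c a b \<longleftrightarrow> a \<noteq> b \<and> c a = c b \<and> (depends_on (f a) b \<or> depends_on (f b) a)"

text \<open>N_Ik \<union> {k}: vertex set of the interference-to-k communication graph\<close>
definition nbhd :: "('a \<Rightarrow> real^'a \<Rightarrow> real) \<Rightarrow> ('a \<Rightarrow> nat) \<Rightarrow> 'a \<Rightarrow> 'a set" where
  "nbhd f c k = {b. interf f c k b} \<union> {k}"

definition graph_connected :: "'v set \<Rightarrow> ('v \<Rightarrow> 'v \<Rightarrow> bool) \<Rightarrow> bool" where
  "graph_connected V E \<longleftrightarrow>
     (\<forall>u\<in>V. \<forall>v\<in>V. (u, v) \<in> {(x, y). x \<in> V \<and> y \<in> V \<and> E x y}\<^sup>*)"

definition class_K :: "(real \<Rightarrow> real) \<Rightarrow> bool" where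
  "class_K \<alpha> \<longleftrightarrow> continuous_on {0..} \<alpha> \<and> \<alpha> 0 = 0 \<and> strict_mono_on {0..} \<alpha>"

definition class_KL :: "(real \<Rightarrow> real \<Rightarrow> real) \<Rightarrow> bool" where
  "class_KL \<phi> \<longleftrightarrow> continuous_on ({0..} \<times> {0..}) (\<lambda>(r, s). \<phi> r s) \<and>
     (\<forall>s\<ge>0. class_K (\<lambda>r. \<phi> r s)) \<and>
     (\<forall>r\<ge>0. antimono_on {0..} (\<phi> r) \<and> (\<phi> r \<longlongrightarrow> 0) at_top)"

definition gterm :: "('a \<Rightarrow> real^'a \<Rightarrow> real) \<Rightarrow> ('a \<Rightarrow> 'a \<Rightarrow> real) \<Rightarrow> real^'a \<Rightarrow> 'a \<Rightarrow> 'a \<Rightarrow> real" where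
  "gterm f w x j k = w j k + partial_deriv (f j) k x"

text \<open>R k j p: entry (row j \<in> nbhd k, column p < n_k - 1) of R_k; [1/sqrt n_k, R_k] orthogonal\<close>
definition valid_R :: "('a \<Rightarrow> real^'a \<Rightarrow> real) \<Rightarrow> ('a \<Rightarrow> nat) \<Rightarrow> ('a \<Rightarrow> 'a \<Rightarrow> nat \<Rightarrow> real) \<Rightarrow> bool" where
  "valid_R f c R \<longleftrightarrow> (\<forall>k. \<forall>p < card (nbhd f c k) - 1.
      (\<Sum>j\<in>nbhd f c k. R k j p) = 0 \<and>
      (\<forall>q < card (nbhd f c k) - 1.
         (\<Sum>j\<in>nbhd f c k. R k j p * R k j q) = (if p = q then 1 else 0)))"

definition Gbar :: "('a \<Rightarrow> real^'a \<Rightarrow> real) \<Rightarrow> ('a \<Rightarrow> nat) \<Rightarrow> ('a \<Rightarrow> 'a \<Rightarrow> nat \<Rightarrow> real)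
    \<Rightarrow> ('a \<Rightarrow> 'a \<Rightarrow> real) \<Rightarrow> real^'a \<Rightarrow> 'a \<Rightarrow> nat \<Rightarrow> real" where
  "Gbar f c R w x k p = (\<Sum>j\<in>nbhd f c k. R k j p * gterm f w x j k)"

text \<open>norm of chi_{-j0} = (Gbar_{-j0}, x - x*)\<close>
definition chi_norm :: "('a \<Rightarrow> real^'a \<Rightarrow> real) \<Rightarrow> ('a \<Rightarrow> nat) \<Rightarrow> ('a \<Rightarrow> 'a \<Rightarrow> nat \<Rightarrow> real)
    \<Rightarrow> nat \<Rightarrow> real^'a \<Rightarrow> ('a \<Rightarrow> 'a \<Rightarrow> real) \<Rightarrow> real^'a \<Rightarrow> real" where
  "chi_norm f c R j0 xs w x = sqrt
     ((\<Sum>k\<in>{k. c k \<noteq> j0}. \<Sum>p<card (nbhd f c k) - 1. (Gbar f c R w x k p)\<^sup>2)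
      + (norm (x - xs))\<^sup>2)"

definition seeking_solution :: "('a \<Rightarrow> real^'a \<Rightarrow> real) \<Rightarrow> ('a \<Rightarrow> nat) \<Rightarrow> ('a \<Rightarrow> 'a \<Rightarrow> real)
    \<Rightarrow> ('a \<Rightarrow> real) \<Rightarrow> real \<Rightarrow> (real \<Rightarrow> real^'a) \<Rightarrow> (real \<Rightarrow> 'a \<Rightarrow> 'a \<Rightarrow> real) \<Rightarrow> bool" where
  "seeking_solution f c A d T x w \<longleftrightarrow>
     (\<forall>a. \<forall>b\<in>nbhd f c a. w 0 a b = 0) \<and>
     (\<forall>t\<in>{0..<T}.
        (x has_vector_derivative (\<chi> a. - d a * gterm f (w t) (x t) a a)) (at t within {0..<T}) \<and>
        (\<forall>j. \<forall>k\<in>nbhd f c j.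
           ((\<lambda>s. w s j k) has_real_derivative
              (- (\<Sum>l\<in>nbhd f c k. A j l * (gterm f (w t) (x t) j k - gterm f (w t) (x t) l k))))
           (at t within {0..<T})))"

end

theory Submission
  imports Defs "HOL-Real_Asymp.Real_Asymp"
begin
text \<open>Let \<open>V = \<Sum>\<^sub>a (n\<^sub>a / d\<^sub>a) (x\<^sub>a - x\<^sup>*\<^sub>a)\<^sup>2\<close> be a weighted distance to the Nash
  equilibrium, where \<open>n\<^sub>a\<close> is the size of the interference neighbourhood of \<open>a\<close>, and let
  \<open>U = \<Sum>\<^sub>k \<Sum>\<^sub>j (g\<^sub>j\<^sub>k - mean\<^sub>j g\<^sub>j\<^sub>k)\<^sup>2\<close> be the disagreement of the gradient estimates. The
  consensus dynamics preserve \<open>\<Sum>\<^sub>j w\<^sub>j\<^sub>k = 0\<close>, so the mean estimate is exactly the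
  pseudo-gradient component divided by \<open>n\<^sub>k\<close>; the Laplacian part then contracts \<open>U\<close> at the
  algebraic connectivity of the communication graphs, while the action dynamics decrease \<open>V\<close> by
  strict monotonicity of the pseudo-gradient, up to a cross term with \<open>U\<close>. On a sublevel set
  \<open>W = V + U \<le> R\<close> this gives \<open>W' \<le> -\<delta> \<omega> + \<delta>\<^sup>2 K\<close> with \<open>\<omega>\<close> positive definite, the \<open>\<delta>\<^sup>2\<close> term
  coming from the motion of \<open>x\<close> inside the estimates. For \<open>\<delta>\<close> small the perturbation is
  dominated outside a small sublevel set \<open>W \<le> \<eta>\<close>, and a comparison principle yields a
  \<open>\<K>\<L>\<close> estimate for \<open>W\<close>. Finally \<open>\<chi>\<close> is comparable to \<open>\<surd>W\<close>: the columns of \<open>R\<^sub>k\<close>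
  complete \<open>\<one>/\<surd>n\<^sub>k\<close> to an orthonormal basis, so \<open>Gbar k\<close> carries exactly the disagreement
  (Parseval), and the single agent of coalition \<open>j\<^sub>0\<close> contributes no disagreement.\<close>

lemma DERIV_nonpos_imp_decreasing_within:
  fixes z :: "real \<Rightarrow> real"
  assumes "a \<le> b" "{a..b} \<subseteq> S"
    and "\<And>t. t \<in> {a..b} \<Longrightarrow> (z has_real_derivative z' t) (at t within S)"
    and "\<And>t. t \<in> {a..b} \<Longrightarrow> z' t \<le> 0"
  shows "z b \<le> z a"
proof -
  have "(z has_derivative (\<lambda>h. z' t * h)) (at t within {a..b})" if "t \<in> {a..b}" for t
    using DERIV_subset[OF assms(3)[OF that] assms(2)] by (simp add: has_field_derivative_def)
  then obtain x where x: "x \<in> {a..b}" "z b - z a = z' x * (b - a)"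
    using mvt_very_simple[OF assms(1), of z "\<lambda>t h. z' t * h"] by auto
  have "z' x * (b - a) \<le> 0" using assms(1) assms(4)[OF x(1)] by (simp add: mult_nonpos_nonneg)
  thus ?thesis using x by simp
qed

text \<open>A rate \<open>\<alpha>\<close> for the comparison principle. \<open>H = exp (\<integral>\<^sub>1 1/\<alpha>)\<close> conjugates the flow of
  \<open>y' = -\<alpha> y\<close> to exponential decay: along \<open>y' \<le> -\<kappa> \<alpha> y\<close> the quantity \<open>H y\<close> decays at least
  like \<open>exp (-\<kappa> t)\<close>. The bound \<open>\<alpha> y \<le> y\<close> makes \<open>H\<close> vanish at \<open>0\<close> and grow at least
  linearly, so \<open>H\<close> is a homeomorphism of \<open>[0, \<infinity>)\<close>.\<close>

locale decay_rate =
  fixes \<alpha> :: "real \<Rightarrow> real"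
  assumes continuous_on_rate: "continuous_on {0<..} \<alpha>" and rate_pos: "\<And>y. y > 0 \<Longrightarrow> \<alpha> y > 0"
    and rate_le_self: "\<And>y. y > 0 \<Longrightarrow> \<alpha> y \<le> y"
begin

definition inv_rate :: "real \<Rightarrow> real" where "inv_rate y = 1 / \<alpha> y"
definition L :: "real \<Rightarrow> real" where
  "L y = (if 1 \<le> y then integral {1..y} inv_rate else - integral {y..1} inv_rate)"

lemma continuous_on_inv_rate: assumes "0 < a" shows "continuous_on {a..b} inv_rate"
proof -
  have "\<alpha> u \<noteq> 0" if "u \<in> {a..b}" for u using rate_pos[of u] that assms by auto
  thus ?thesis unfolding inv_rate_def using assms
    by (intro continuous_on_divide continuous_on_const continuous_on_subset[OF continuous_on_rate]) auto
qed

lemma L_eq_integral_diff: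
  assumes "0 < a" "a \<le> 1" "a \<le> u"
  shows "L u = integral {a..u} inv_rate - integral {a..1} inv_rate"
proof (cases "1 \<le> u")
  case True
  have i: "inv_rate integrable_on {a..u}" using continuous_on_inv_rate[OF assms(1)] integrable_continuous_real by blast
  have "integral {a..1} inv_rate + integral {1..u} inv_rate = integral {a..u} inv_rate"
    using Henstock_Kurzweil_Integration.integral_combine[OF assms(2) True i] .
  thus ?thesis using True unfolding L_def by simp
next
  case False
  have i: "inv_rate integrable_on {a..1}" using continuous_on_inv_rate[OF assms(1)] integrable_continuous_real by blast
  have "integral {a..u} inv_rate + integral {u..1} inv_rate = integral {a..1} inv_rate"
    using Henstock_Kurzweil_Integration.integral_combine[OF assms(3) _ i] False by simp
  thus ?thesis using False unfolding L_def by simp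
qed

lemma L_has_derivative:
  assumes "y > 0" shows "(L has_real_derivative inv_rate y) (at y)"
proof -
  define a where "a = min 1 (y/2)"
  define b where "b = max 1 (2*y)"
  have a: "0 < a" "a \<le> 1" "a < y" using assms unfolding a_def by auto
  have b: "y < b" using assms unfolding b_def by auto
  have "((\<lambda>u. integral {a..u} inv_rate) has_vector_derivative inv_rate y) (at y within {a..b})"
    by (rule integral_has_vector_derivative[OF continuous_on_inv_rate[OF a(1)]]) (use a b in auto)
  moreover have "interior {a..b} = {a<..<b}" by simp
  hence "at y within {a..b} = at y" using a b by (intro at_within_interior) auto
  ultimately have "((\<lambda>u. integral {a..u} inv_rate) has_real_derivative inv_rate y) (at y)"
    by (simp add: has_real_derivative_iff_has_vector_derivative)
  hence "((\<lambda>u. integral {a..u} inv_rate - integral {a..1} inv_rate) has_real_derivative inv_rate y) (at y)"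
    by (auto intro!: derivative_eq_intros)
  thus ?thesis
    by (rule has_field_derivative_transform_within_open[where S="{a<..<b}"])
       (use a b in \<open>auto intro!: L_eq_integral_diff[symmetric]\<close>)
qed

lemma inv_rate_pos: "y > 0 \<Longrightarrow> inv_rate y > 0" unfolding inv_rate_def using rate_pos by simp
lemma inv_rate_ge: "y > 0 \<Longrightarrow> inv_rate y \<ge> 1 / y" unfolding inv_rate_def using rate_pos rate_le_self
  by (simp add: frac_le)

lemma L_1: "L 1 = 0" unfolding L_def by simp

lemma continuous_on_L: "0 < a \<Longrightarrow> continuous_on {a..b} L"
  by (intro continuous_at_imp_continuous_on ballI DERIV_isCont[OF L_has_derivative]) auto

lemma L_le_ln: assumes "0 < y" "y \<le> 1" shows "L y \<le> ln y"
proof -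
  have "(\<lambda>u. L u - ln u) y \<le> (\<lambda>u. L u - ln u) 1"
  proof (rule DERIV_nonneg_imp_increasing_open[OF assms(2)])
    fix u assume "y < u" "u < 1"
    hence "0 < u" using assms by simp
    show "\<exists>d. ((\<lambda>u. L u - ln u) has_real_derivative d) (at u) \<and> 0 \<le> d"
      using \<open>0 < u\<close> inv_rate_ge[of u]
      by (intro exI[of _ "inv_rate u - 1 / u"]) (auto intro!: derivative_eq_intros L_has_derivative)
  qed (use assms in \<open>auto intro!: continuous_on_diff continuous_on_L continuous_on_ln\<close>)
  thus ?thesis using L_1 by simp
qed

lemma ln_le_L: assumes "1 \<le> y" shows "ln y \<le> L y"
proof -
  have "(\<lambda>u. L u - ln u) 1 \<le> (\<lambda>u. L u - ln u) y"
  proof (rule DERIV_nonneg_imp_increasing_open[OF assms])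
    fix u assume "1 < u" "u < y"
    hence "0 < u" by simp
    show "\<exists>d. ((\<lambda>u. L u - ln u) has_real_derivative d) (at u) \<and> 0 \<le> d"
      using \<open>0 < u\<close> inv_rate_ge[of u]
      by (intro exI[of _ "inv_rate u - 1 / u"]) (auto intro!: derivative_eq_intros L_has_derivative)
  qed (use assms in \<open>auto intro!: continuous_on_diff continuous_on_L continuous_on_ln\<close>)
  thus ?thesis using L_1 by simp
qed

lemma L_strict_mono: assumes "0 < u" "u < v" shows "L u < L v"
  by (rule DERIV_pos_imp_increasing[OF assms(2)])
     (use assms L_has_derivative inv_rate_pos in \<open>meson less_le_trans\<close>)

definition H :: "real \<Rightarrow> real" where "H y = (if y \<le> 0 then 0 else exp (L y))"

lemma H_0: "H 0 = 0" unfolding H_def by simp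

lemma H_pos: "y > 0 \<Longrightarrow> H y > 0" unfolding H_def by simp

lemma H_nonneg: "H y \<ge> 0" unfolding H_def by simp

lemma H_has_derivative: assumes "y > 0" shows "(H has_real_derivative H y * inv_rate y) (at y)"
proof -
  have "((\<lambda>u. exp (L u)) has_real_derivative exp (L y) * inv_rate y) (at y)"
    by (rule derivative_eq_intros L_has_derivative[OF assms] | simp)+
  hence "((\<lambda>u. exp (L u)) has_real_derivative H y * inv_rate y) (at y)"
    using assms unfolding H_def by simp
  thus ?thesis
    by (rule has_field_derivative_transform_within_open[where S="{0<..}"]) (use assms in \<open>auto simp: H_def\<close>)
qed

lemma H_le_self: assumes "0 \<le> y" "y \<le> 1" shows "H y \<le> y"
proof (cases "y = 0")
  case True then show ?thesis by (simp add: H_0)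
next
  case False
  hence "0 < y" using assms by simp
  hence "exp (L y) \<le> exp (ln y)" using L_le_ln assms by (simp del: exp_ln)
  thus ?thesis using \<open>0 < y\<close> unfolding H_def by simp
qed

lemma self_le_H: assumes "1 \<le> y" shows "y \<le> H y"
proof -
  have "exp (ln y) \<le> exp (L y)" using ln_le_L assms by (simp del: exp_ln)
  thus ?thesis using assms unfolding H_def by simp
qed

lemma strict_mono_on_H: "strict_mono_on {0..} H"
proof (rule strict_mono_onI)
  fix r s :: real assume rs: "r \<in> {0..}" "s \<in> {0..}" "r < s"
  show "H r < H s"
  proof (cases "r = 0")
    case True then show ?thesis using rs H_pos by (simp add: H_0)
  next
    case False
    hence "0 < r" using rs by simp
    thus ?thesis using L_strict_mono[OF _ rs(3)] rs unfolding H_def by simp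
  qed
qed

lemma H_mono: "0 \<le> r \<Longrightarrow> r \<le> s \<Longrightarrow> H r \<le> H s"
  using strict_mono_on_leD[OF strict_mono_on_H] by simp

lemma continuous_on_H: "continuous_on {0..} H"
proof -
  have "continuous (at y within {0..}) H" if y: "y \<in> {0..}" for y
  proof (cases "y = 0")
    case False
    hence "y > 0" using y by simp
    thus ?thesis using DERIV_isCont[OF H_has_derivative] continuous_at_imp_continuous_within by blast
  next
    case True
    have "(H \<longlongrightarrow> 0) (at 0 within {0..})"
    proof (rule tendsto_sandwich[where f="\<lambda>_. 0" and h="\<lambda>u. u"])
      show "\<forall>\<^sub>F n in at 0 within {0..}. 0 \<le> H n" by (simp add: H_nonneg)
      show "\<forall>\<^sub>F n in at 0 within {0..}. H n \<le> n"
        unfolding eventually_at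
        by (rule exI[where x=1]) (auto intro!: H_le_self simp: dist_real_def)
      show "((\<lambda>_. 0) \<longlongrightarrow> (0::real)) (at 0 within {0..})" by simp
      show "((\<lambda>u. u) \<longlongrightarrow> (0::real)) (at 0 within {0..})"
        by (metis tendsto_ident_at)
    qed
    thus ?thesis using True by (simp add: continuous_within H_0)
  qed
  thus ?thesis using continuous_on_eq_continuous_within by blast
qed

definition H_inv :: "real \<Rightarrow> real" where "H_inv y = (THE r. 0 \<le> r \<and> H r = y)"

lemma H_inj: "0 \<le> r \<Longrightarrow> 0 \<le> r' \<Longrightarrow> H r = H r' \<Longrightarrow> r = r'"
  using strict_mono_on_eqD[OF strict_mono_on_H] by simp

lemma H_surj: assumes "0 \<le> y" shows "\<exists>r. 0 \<le> r \<and> r \<le> max 1 y \<and> H r = y"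
proof -
  have "H 0 \<le> y" using assms H_0 by simp
  moreover have "y \<le> H (max 1 y)" using self_le_H[of "max 1 y"] by simp
  ultimately show ?thesis using IVT'[of H 0 y "max 1 y"] continuous_on_subset[OF continuous_on_H]
    by force
qed

lemma H_inv_spec: assumes "0 \<le> y" shows "0 \<le> H_inv y \<and> H (H_inv y) = y"
proof -
  obtain r where r: "0 \<le> r" "H r = y" using H_surj[OF assms] by auto
  have "H_inv y = r" unfolding H_inv_def
    by (rule the_equality) (use r H_inj in auto)
  thus ?thesis using r by simp
qed

lemma H_inv_H: "0 \<le> r \<Longrightarrow> H_inv (H r) = r"
  using H_inv_spec[OF H_nonneg[of r]] H_inj by auto

lemma H_inv_0: "H_inv 0 = 0" using H_inv_H[of 0] H_0 by simp

lemma H_inv_nonneg: "0 \<le> y \<Longrightarrow> 0 \<le> H_inv y" using H_inv_spec by blast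

lemma H_inv_less_iff: "0 \<le> y \<Longrightarrow> 0 \<le> r \<Longrightarrow> H_inv y < r \<longleftrightarrow> y < H r"
  using H_inv_spec[of y] strict_mono_on_less[OF strict_mono_on_H, of "H_inv y" r] by auto

lemma strict_mono_on_H_inv: "strict_mono_on {0..} H_inv"
proof (rule strict_mono_onI)
  fix r s :: real assume rs: "r \<in> {0..}" "s \<in> {0..}" "r < s"
  show "H_inv r < H_inv s" using H_inv_less_iff[of r "H_inv s"] H_inv_spec[of s] rs by auto
qed

lemma H_inv_mono: "0 \<le> r \<Longrightarrow> r \<le> s \<Longrightarrow> H_inv r \<le> H_inv s"
  using strict_mono_on_leD[OF strict_mono_on_H_inv] by simp

lemma H_image_atLeastAtMost: assumes "0 \<le> M" shows "H ` {0..M} = {0..H M}"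
proof
  show "H ` {0..M} \<subseteq> {0..H M}" using H_nonneg H_mono by auto
  show "{0..H M} \<subseteq> H ` {0..M}"
  proof
    fix z assume z: "z \<in> {0..H M}"
    then obtain r where r: "0 \<le> r" "H r = z" using H_inv_spec[of z] by auto
    have "r \<le> M" using r z strict_mono_on_less_eq[OF strict_mono_on_H, of r M] assms by auto
    thus "z \<in> H ` {0..M}" using r by auto
  qed
qed

lemma continuous_on_H_inv: "continuous_on {0..} H_inv"
proof -
  have "continuous (at y within {0..}) H_inv" if y: "y \<in> {0..}" for y
  proof -
    define M where "M = max 1 (y + 1)"
    have M: "0 \<le> M" "y + 1 \<le> H M" using self_le_H[of M] unfolding M_def by auto
    have "continuous_on (H ` {0..M}) H_inv"
      by (rule continuous_on_inv) (use continuous_on_subset[OF continuous_on_H] H_inv_H in auto)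
    hence c: "continuous_on {0..H M} H_inv" using H_image_atLeastAtMost[OF M(1)] by simp
    have "y \<in> {0..H M}" using y M by auto
    hence "continuous (at y within {0..H M}) H_inv"
      using c continuous_on_eq_continuous_within by blast
    moreover have "at y within {0..} = at y within {0..H M}"
      by (rule at_within_nhd[where S="{..<H M}"]) (use y M in auto)
    ultimately show ?thesis by simp
  qed
  thus ?thesis using continuous_on_eq_continuous_within by blast
qed

lemma H_inv_tendsto_0:
  assumes "(u \<longlongrightarrow> 0) F" "\<forall>\<^sub>F x in F. 0 \<le> u x"
  shows "((\<lambda>x. H_inv (u x)) \<longlongrightarrow> 0) F"
proof (rule order_tendstoI)
  fix a :: real assume a: "a < 0"
  show "\<forall>\<^sub>F x in F. a < H_inv (u x)"
    using assms(2) by (rule eventually_mono) (use H_inv_nonneg a in force)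
next
  fix a :: real assume a: "0 < a"
  hence "0 < H a" using H_pos by simp
  hence ev: "\<forall>\<^sub>F x in F. u x < H a" using assms(1) order_tendstoD(2) by blast
  show "\<forall>\<^sub>F x in F. H_inv (u x) < a"
    using eventually_conj[OF ev assms(2)] by (rule eventually_mono) (use H_inv_less_iff a in force)
qed

text \<open>The \<open>\<K>\<L>\<close> bound of the theorem, for a Lyapunov function \<open>W\<close> with
  \<open>c0 \<chi>\<^sup>2 \<le> W \<le> c1 \<chi>\<^sup>2\<close> that obeys \<open>W t \<le> H_inv (H (W 0) * exp (- s / 2))\<close> at time
  \<open>s = \<delta> t\<close>.\<close>

definition KL_bound :: "real \<Rightarrow> real \<Rightarrow> real \<Rightarrow> real \<Rightarrow> real" where
  "KL_bound c0 c1 r s = sqrt (H_inv (H (c1 * r\<^sup>2) * exp (- s / 2)) / c0)"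

lemma H_mult_exp_nonneg: "0 \<le> H r * exp s"
  using H_nonneg by simp

lemma continuous_on_KL_bound:
  assumes "0 < c0" "0 < c1" shows "continuous_on S (\<lambda>p. KL_bound c0 c1 (fst p) (snd p))"
proof -
  have "continuous_on S (\<lambda>p. H (c1 * (fst p)\<^sup>2) * exp (- snd p / 2))"
    using assms by (intro continuous_intros continuous_on_compose2[OF continuous_on_H])
                   (auto intro!: continuous_intros)
  hence "continuous_on S (\<lambda>p. H_inv (H (c1 * (fst p)\<^sup>2) * exp (- snd p / 2)))"
    by (rule continuous_on_compose2[OF continuous_on_H_inv]) (use H_mult_exp_nonneg in auto)
  thus ?thesis unfolding KL_bound_def using assms by (intro continuous_intros) auto
qed

lemma strict_mono_on_KL_bound:
  assumes "0 < c0" "0 < c1" shows "strict_mono_on {0..} (\<lambda>r. KL_bound c0 c1 r s)"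
proof (rule strict_mono_onI)
  fix r r' :: real assume rr: "r \<in> {0..}" "r' \<in> {0..}" "r < r'"
  have "c1 * r\<^sup>2 < c1 * r'\<^sup>2" using rr assms by (simp add: power_strict_mono)
  hence "H (c1 * r\<^sup>2) < H (c1 * r'\<^sup>2)" using strict_mono_on_less[OF strict_mono_on_H] assms by simp
  hence "H (c1 * r\<^sup>2) * exp (- s / 2) < H (c1 * r'\<^sup>2) * exp (- s / 2)" by simp
  hence "H_inv (H (c1 * r\<^sup>2) * exp (- s / 2)) < H_inv (H (c1 * r'\<^sup>2) * exp (- s / 2))"
    using strict_mono_on_less[OF strict_mono_on_H_inv] H_mult_exp_nonneg by simp
  thus "KL_bound c0 c1 r s < KL_bound c0 c1 r' s" unfolding KL_bound_def using assms
    by (simp add: divide_strict_right_mono)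
qed

lemma antimono_on_KL_bound: assumes "0 < c0" shows "antimono_on {0..} (KL_bound c0 c1 r)"
proof (rule monotone_onI)
  fix s s' :: real assume "s \<in> {0..}" "s' \<in> {0..}" "s \<le> s'"
  hence "H (c1 * r\<^sup>2) * exp (- s' / 2) \<le> H (c1 * r\<^sup>2) * exp (- s / 2)"
    using H_nonneg by (intro mult_left_mono) auto
  hence "H_inv (H (c1 * r\<^sup>2) * exp (- s' / 2)) \<le> H_inv (H (c1 * r\<^sup>2) * exp (- s / 2))"
    using H_inv_mono H_mult_exp_nonneg by blast
  thus "KL_bound c0 c1 r s' \<le> KL_bound c0 c1 r s" unfolding KL_bound_def using assms
    by (simp add: divide_right_mono)
qed

lemma KL_bound_tendsto_0: assumes "0 < c0" shows "(KL_bound c0 c1 r \<longlongrightarrow> 0) at_top"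
proof -
  have "((\<lambda>s::real. exp (- s / 2)) \<longlongrightarrow> 0) at_top" by real_asymp
  hence "((\<lambda>s. H (c1 * r\<^sup>2) * exp (- s / 2)) \<longlongrightarrow> H (c1 * r\<^sup>2) * 0) at_top"
    by (intro tendsto_intros)
  hence "((\<lambda>s. H_inv (H (c1 * r\<^sup>2) * exp (- s / 2))) \<longlongrightarrow> 0) at_top"
    by (intro H_inv_tendsto_0 always_eventually allI mult_nonneg_nonneg H_nonneg) auto
  hence "((\<lambda>s. sqrt (H_inv (H (c1 * r\<^sup>2) * exp (- s / 2)) / c0)) \<longlongrightarrow> sqrt (0 / c0)) at_top"
    using assms by (intro tendsto_intros) auto
  thus ?thesis unfolding KL_bound_def by simp
qed

lemma class_KL_KL_bound: assumes "0 < c0" "0 < c1" shows "class_KL (KL_bound c0 c1)"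
proof -
  have "continuous_on {0..} (\<lambda>r. KL_bound c0 c1 r s)" for s
    using continuous_on_compose2[OF continuous_on_KL_bound[OF assms, of UNIV], of "{0..}" "\<lambda>r. (r, s)"]
    by (simp add: continuous_on_Pair continuous_on_id continuous_on_const)
  hence "class_K (\<lambda>r. KL_bound c0 c1 r s)" for s
    unfolding class_K_def using strict_mono_on_KL_bound[OF assms] by (simp add: KL_bound_def H_0 H_inv_0)
  moreover have "continuous_on ({0..} \<times> {0..}) (\<lambda>(r, s). KL_bound c0 c1 r s)"
    using continuous_on_KL_bound[OF assms] by (simp add: case_prod_beta)
  ultimately show ?thesis unfolding class_KL_def
    using antimono_on_KL_bound KL_bound_tendsto_0 assms by blast
qed

end

lemma last_crossing:
  fixes y :: "real \<Rightarrow> real"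
  assumes cont: "continuous_on {a..b} y" and s: "s \<in> {a..b}" "y s \<le> \<eta>" and b: "\<eta> < y b"
  obtains t0 where "t0 \<in> {a..<b}" "y t0 = \<eta>" "\<And>\<tau>. \<tau> \<in> {t0<..b} \<Longrightarrow> \<eta> < y \<tau>"
proof -
  define Z where "Z = {\<tau> \<in> {a..b}. y \<tau> \<le> \<eta>}"
  have "closed Z" unfolding Z_def
    by (rule continuous_on_closed_Collect_le[OF cont continuous_on_const]) auto
  moreover have bdd: "bdd_above Z" by (auto simp: Z_def bdd_above_def)
  ultimately have "Sup Z \<in> Z" using s by (intro closed_contains_Sup) (auto simp: Z_def)
  hence t0: "a \<le> Sup Z" "Sup Z \<le> b" "y (Sup Z) \<le> \<eta>" unfolding Z_def by auto
  hence "Sup Z < b" using b by (metis order_le_less not_le)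
  have above: "\<eta> < y \<tau>" if "\<tau> \<in> {Sup Z<..b}" for \<tau>
  proof (rule ccontr)
    assume "\<not> \<eta> < y \<tau>"
    hence "\<tau> \<in> Z" using that t0 unfolding Z_def by auto
    hence "\<tau> \<le> Sup Z" by (rule cSup_upper[OF _ bdd])
    thus False using that by simp
  qed
  define Y where "Y = {\<tau> \<in> {Sup Z..b}. \<eta> \<le> y \<tau>}"
  have "closed Y" unfolding Y_def
    by (rule continuous_on_closed_Collect_le) (use t0 in \<open>auto intro: continuous_intros continuous_on_subset[OF cont]\<close>)
  hence "Inf {Sup Z<..b} \<in> Y"
    by (rule closed_subset_contains_Inf) (use above \<open>Sup Z < b\<close> in \<open>auto simp: Y_def less_imp_le\<close>)
  hence "y (Sup Z) = \<eta>" using \<open>Sup Z < b\<close> t0 unfolding Y_def by simp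
  thus ?thesis using that[of "Sup Z"] t0 \<open>Sup Z < b\<close> above by auto
qed

lemma first_crossing:
  fixes y :: "real \<Rightarrow> real"
  assumes cont: "continuous_on {a..b} y" and "a \<le> b" "y a < R" "R \<le> y b"
  obtains t0 where "t0 \<in> {a<..b}" "R \<le> y t0" "\<And>\<tau>. \<tau> \<in> {a..t0} \<Longrightarrow> y \<tau> \<le> R"
proof -
  define Z where "Z = {\<tau> \<in> {a..b}. R \<le> y \<tau>}"
  have "closed Z" unfolding Z_def
    by (rule continuous_on_closed_Collect_le[OF continuous_on_const cont]) auto
  moreover have bdd: "bdd_below Z" by (auto simp: Z_def bdd_below_def)
  ultimately have "Inf Z \<in> Z" using assms by (intro closed_contains_Inf) (auto simp: Z_def)
  hence t0: "a \<le> Inf Z" "Inf Z \<le> b" "R \<le> y (Inf Z)" unfolding Z_def by auto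
  hence "a < Inf Z" using assms by (metis order_le_less not_le)
  have below: "y \<tau> < R" if "\<tau> \<in> {a..<Inf Z}" for \<tau>
  proof (rule ccontr)
    assume "\<not> y \<tau> < R"
    hence "\<tau> \<in> Z" using that t0 unfolding Z_def by auto
    hence "Inf Z \<le> \<tau>" by (rule cInf_lower[OF _ bdd])
    thus False using that by simp
  qed
  define Y where "Y = {\<tau> \<in> {a..Inf Z}. y \<tau> \<le> R}"
  have "closed Y" unfolding Y_def
    by (rule continuous_on_closed_Collect_le) (use t0 in \<open>auto intro: continuous_intros continuous_on_subset[OF cont]\<close>)
  hence "Sup {a..<Inf Z} \<in> Y"
    by (rule closed_subset_contains_Sup) (use below \<open>a < Inf Z\<close> in \<open>auto simp: Y_def less_imp_le\<close>)
  hence "y (Inf Z) \<le> R" using \<open>a < Inf Z\<close> unfolding Y_def by simp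
  hence "y \<tau> \<le> R" if "\<tau> \<in> {a..Inf Z}" for \<tau>
    using below[of \<tau>] that by (cases "\<tau> = Inf Z") auto
  thus ?thesis using that[of "Inf Z"] t0 \<open>a < Inf Z\<close> by auto
qed

text \<open>The comparison principle: a nonnegative \<open>y\<close> with \<open>y' \<le> -\<kappa> \<alpha> y\<close> on the band
  \<open>\<eta> \<le> y \<le> R\<close> never leaves \<open>[0, R)\<close> and decays like the solution of \<open>y' = -\<kappa> \<alpha> y\<close> until it
  enters \<open>[0, \<eta>]\<close>, where it is trapped.\<close>

locale decaying_trajectory = decay_rate +
  fixes y y' :: "real \<Rightarrow> real" and T \<kappa> \<eta> R :: real
  assumes y_has_derivative:
      "\<And>t. t \<in> {0..<T} \<Longrightarrow> (y has_real_derivative y' t) (at t within {0..<T})"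
    and y_decays: "\<And>t. t \<in> {0..<T} \<Longrightarrow> \<eta> \<le> y t \<Longrightarrow> y t \<le> R \<Longrightarrow> y' t \<le> - \<kappa> * \<alpha> (y t)"
    and eta: "0 < \<eta>" "\<eta> < R" and y_0: "0 \<le> y 0" "y 0 < R" and kappa_pos: "0 < \<kappa>"
    and y_nonneg: "\<And>t. t \<in> {0..<T} \<Longrightarrow> 0 \<le> y t"
begin

lemma continuous_on_y: "0 \<le> a \<Longrightarrow> b < T \<Longrightarrow> continuous_on {a..b} y"
  by (rule continuous_on_subset[OF DERIV_continuous_on[OF y_has_derivative]]) auto

lemma H_exp_decreasing:
  assumes "0 \<le> a" "a \<le> b" "b < T" and band: "\<And>t. t \<in> {a..b} \<Longrightarrow> \<eta> \<le> y t \<and> y t \<le> R"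
  shows "H (y b) * exp (\<kappa> * b) \<le> H (y a) * exp (\<kappa> * a)"
proof (rule DERIV_nonpos_imp_decreasing_within[where z="\<lambda>t. H (y t) * exp (\<kappa> * t)" and S="{0..<T}"])
  fix t assume t: "t \<in> {a..b}"
  hence t': "t \<in> {0..<T}" using assms by auto
  have "0 < y t" using band[OF t] eta by simp
  show "((\<lambda>t. H (y t) * exp (\<kappa> * t)) has_real_derivative
      H (y t) * inv_rate (y t) * y' t * exp (\<kappa> * t) + H (y t) * (exp (\<kappa> * t) * \<kappa>)) (at t within {0..<T})"
  proof -
    have "((\<lambda>t. exp (\<kappa> * t)) has_real_derivative exp (\<kappa> * t) * \<kappa>) (at t within {0..<T})"
      by (auto intro!: derivative_eq_intros)
    from DERIV_mult[OF DERIV_chain2[OF H_has_derivative[OF \<open>0 < y t\<close>] y_has_derivative[OF t']] this]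
    show ?thesis by (simp add: algebra_simps)
  qed
  have "H (y t) * inv_rate (y t) * y' t \<le> H (y t) * inv_rate (y t) * (- \<kappa> * \<alpha> (y t))"
    using y_decays[OF t'] band[OF t] H_pos[OF \<open>0 < y t\<close>] inv_rate_pos[OF \<open>0 < y t\<close>]
    by (intro mult_left_mono) auto
  also have "\<dots> = - \<kappa> * H (y t)" using rate_pos[OF \<open>0 < y t\<close>] by (simp add: inv_rate_def)
  finally have "H (y t) * inv_rate (y t) * y' t \<le> - \<kappa> * H (y t)" .
  hence "H (y t) * inv_rate (y t) * y' t * exp (\<kappa> * t) \<le> - \<kappa> * H (y t) * exp (\<kappa> * t)"
    by (intro mult_right_mono) auto
  thus "H (y t) * inv_rate (y t) * y' t * exp (\<kappa> * t) + H (y t) * (exp (\<kappa> * t) * \<kappa>) \<le> 0"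
    by (simp add: algebra_simps)
qed (use assms in auto)

lemma bound_while_below:
  assumes t1: "t1 \<in> {0..<T}" and below: "\<And>\<tau>. \<tau> \<in> {0..t1} \<Longrightarrow> y \<tau> \<le> R"
  shows "y t1 \<le> max \<eta> (H_inv (H (y 0) * exp (- \<kappa> * t1)))"
proof (rule ccontr)
  assume "\<not> ?thesis"
  hence gt: "\<eta> < y t1" "H_inv (H (y 0) * exp (- \<kappa> * t1)) < y t1" by auto
  show False
  proof (cases "\<exists>s\<in>{0..t1}. y s \<le> \<eta>")
    case False
    hence "\<eta> \<le> y \<tau> \<and> y \<tau> \<le> R" if "\<tau> \<in> {0..t1}" for \<tau>
      using below[OF that] that by (meson less_imp_le not_le)
    hence "H (y t1) * exp (\<kappa> * t1) \<le> H (y 0)"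
      using H_exp_decreasing[of 0 t1] t1 by simp
    hence "H (y t1) \<le> H (y 0) * exp (- \<kappa> * t1)" by (simp add: exp_minus field_simps)
    hence "H_inv (H (y t1)) \<le> H_inv (H (y 0) * exp (- \<kappa> * t1))"
      using H_inv_mono H_nonneg by blast
    thus False using H_inv_H y_nonneg t1 gt by force
  next
    case True
    then obtain s where "s \<in> {0..t1}" "y s \<le> \<eta>" by blast
    then obtain t0 where t0: "t0 \<in> {0..<t1}" "y t0 = \<eta>" "\<And>\<tau>. \<tau> \<in> {t0<..t1} \<Longrightarrow> \<eta> < y \<tau>"
      using last_crossing[OF continuous_on_y _ _ gt(1)] t1 by auto
    have "\<eta> \<le> y \<tau> \<and> y \<tau> \<le> R" if "\<tau> \<in> {t0..t1}" for \<tau>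
      using t0 below[of \<tau>] that by (cases "\<tau> = t0") (auto simp: less_imp_le)
    hence "H (y t1) * exp (\<kappa> * t1) \<le> H \<eta> * exp (\<kappa> * t0)"
      using H_exp_decreasing[of t0 t1] t0 t1 by auto
    also have "\<dots> \<le> H \<eta> * exp (\<kappa> * t1)"
      using t0 kappa_pos H_nonneg by (intro mult_left_mono) auto
    finally have "H (y t1) \<le> H \<eta>" by simp
    moreover have "H \<eta> < H (y t1)" using strict_mono_on_less[OF strict_mono_on_H] gt eta by simp
    ultimately show False by simp
  qed
qed

lemma stays_below: assumes "t \<in> {0..<T}" shows "y t < R"
proof (rule ccontr)
  assume "\<not> y t < R"
  then obtain t0 where t0: "t0 \<in> {0<..t}" "R \<le> y t0" "\<And>\<tau>. \<tau> \<in> {0..t0} \<Longrightarrow> y \<tau> \<le> R"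
    using first_crossing[OF continuous_on_y, of 0 t R] assms y_0 by auto
  have "y t0 \<le> max \<eta> (H_inv (H (y 0) * exp (- \<kappa> * t0)))"
    using assms t0 by (intro bound_while_below) auto
  also have "H_inv (H (y 0) * exp (- \<kappa> * t0)) \<le> H_inv (H (y 0))"
    using t0 kappa_pos H_nonneg by (intro H_inv_mono) (auto intro!: mult_left_le)
  hence "max \<eta> (H_inv (H (y 0) * exp (- \<kappa> * t0))) < R"
    using H_inv_H[OF y_0(1)] y_0 eta by auto
  finally show False using t0 by simp
qed

lemma comparison:
  assumes "t \<in> {0..<T}" shows "y t \<le> max \<eta> (H_inv (H (y 0) * exp (- \<kappa> * t)))"
proof (rule bound_while_below[OF assms])
  fix \<tau> assume "\<tau> \<in> {0..t}"
  hence "\<tau> \<in> {0..<T}" using assms by auto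
  thus "y \<tau> \<le> R" using stays_below less_imp_le by blast
qed

end

lemma norm_power2_cart: "(norm e)\<^sup>2 = (\<Sum>a\<in>UNIV. (e$a)\<^sup>2)"
proof -
  have "(norm e)\<^sup>2 = e \<bullet> e" by (rule power2_norm_eq_inner)
  also have "\<dots> = (\<Sum>a\<in>UNIV. e$a * e$a)" by (simp add: inner_vec_def)
  finally show ?thesis by (simp add: power2_eq_square)
qed

text \<open>From a positive definite field \<open>Q\<close> we build a decay rate for the Lyapunov function
  \<open>weighted_sq e + u\<close> along which \<open>dissipation e u\<close> is dissipated. \<open>rate \<rho>\<close> lower-bounds the
  dissipation on the level set \<open>weighted_sq e + u = \<rho>\<close>; the penalty \<open>\<bar>weighted_sq e + u - \<rho>\<bar>\<close>
  in the infimum makes it 1-Lipschitz in \<open>\<rho>\<close>.\<close>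

locale dissipation_rate =
  fixes Q :: "real^'a::finite \<Rightarrow> real^'a" and wt :: "'a \<Rightarrow> real" and lam :: real
  assumes continuous_Q: "continuous_on UNIV Q" and inner_Q_pos: "\<And>e. e \<noteq> 0 \<Longrightarrow> e \<bullet> Q e > 0"
    and wt_pos: "\<And>a. wt a > 0" and lam_pos: "lam > 0"
begin

definition weighted_sq :: "real^'a \<Rightarrow> real" where "weighted_sq e = (\<Sum>a\<in>UNIV. wt a * (e$a)\<^sup>2)"
definition dissipation :: "real^'a \<Rightarrow> real \<Rightarrow> real" where "dissipation e u = 2 * (e \<bullet> Q e) + lam * u"
definition penalized :: "real \<Rightarrow> (real^'a) \<times> real \<Rightarrow> real" where
  "penalized \<rho> p = dissipation (fst p) (snd p) + \<bar>weighted_sq (fst p) + snd p - \<rho>\<bar>"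
definition rate :: "real \<Rightarrow> real" where
  "rate \<rho> = Inf (penalized \<rho> ` {p. snd p \<ge> 0})"
definition wmin :: real where "wmin = Min (range wt)"

lemma inner_Q_nonneg: "0 \<le> e \<bullet> Q e"
  using inner_Q_pos[of e] by (cases "e = 0") auto

lemma weighted_sq_nonneg: "0 \<le> weighted_sq e" unfolding weighted_sq_def using wt_pos
  by (intro sum_nonneg) (simp add: less_imp_le)

lemma weighted_sq_0: "weighted_sq 0 = 0" unfolding weighted_sq_def by simp

lemma dissipation_nonneg: "u \<ge> 0 \<Longrightarrow> 0 \<le> dissipation e u"
  unfolding dissipation_def using inner_Q_nonneg lam_pos by simp

lemma penalized_nonneg: "snd p \<ge> 0 \<Longrightarrow> 0 \<le> penalized \<rho> p"
  unfolding penalized_def using dissipation_nonneg by simp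

lemma penalized_image_ne: "penalized \<rho> ` {p. snd p \<ge> 0} \<noteq> {}" by auto

lemma rate_le_penalized: "snd p \<ge> 0 \<Longrightarrow> rate \<rho> \<le> penalized \<rho> p"
  unfolding rate_def by (rule cInf_lower) (auto intro!: bdd_belowI[of _ 0] penalized_nonneg)

lemma rate_le_dissipation: "u \<ge> 0 \<Longrightarrow> rate (weighted_sq e + u) \<le> dissipation e u"
  using rate_le_penalized[of "(e,u)" "weighted_sq e + u"] unfolding penalized_def by simp

lemma rate_le_self: "\<rho> \<ge> 0 \<Longrightarrow> rate \<rho> \<le> \<rho>"
  using rate_le_penalized[of "(0,0)" \<rho>] unfolding penalized_def dissipation_def by (simp add: weighted_sq_0)

lemma rate_diff_le: "rate \<rho> - \<bar>\<rho> - \<rho>'\<bar> \<le> rate \<rho>'"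
proof -
  have "rate \<rho> - \<bar>\<rho> - \<rho>'\<bar> \<le> penalized \<rho>' p" if "snd p \<ge> 0" for p
  proof -
    have "rate \<rho> \<le> penalized \<rho> p" by (rule rate_le_penalized[OF that])
    also have "\<dots> \<le> penalized \<rho>' p + \<bar>\<rho> - \<rho>'\<bar>" unfolding penalized_def by linarith
    finally show ?thesis by simp
  qed
  thus ?thesis unfolding rate_def[of \<rho>'] by (intro cInf_greatest[OF penalized_image_ne]) auto
qed

lemma lipschitz_on_rate: "1-lipschitz_on UNIV rate"
proof (rule lipschitz_onI)
  fix \<rho> \<rho>' :: real
  show "dist (rate \<rho>) (rate \<rho>') \<le> 1 * dist \<rho> \<rho>'"
    using rate_diff_le[of \<rho> \<rho>'] rate_diff_le[of \<rho>' \<rho>] by (simp add: dist_real_def abs_minus_commute)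
qed simp

lemma continuous_on_rate: "continuous_on S rate"
  by (rule continuous_on_subset[OF lipschitz_on_continuous_on[OF lipschitz_on_rate]]) simp

lemma wmin_pos: "0 < wmin" unfolding wmin_def using wt_pos by auto

lemma wmin_le: "wmin \<le> wt a" unfolding wmin_def by auto

lemma weighted_sq_ge: "wmin * (norm e)\<^sup>2 \<le> weighted_sq e"
  unfolding norm_power2_cart weighted_sq_def sum_distrib_left
  by (intro sum_mono mult_right_mono wmin_le) auto

lemma continuous_on_weighted_sq: "continuous_on S weighted_sq"
  unfolding weighted_sq_def by (intro continuous_intros)

lemma inner_Q_bounded_below_on_shell:
  assumes "0 < r"
  obtains m where "m > 0" "\<And>e. r \<le> weighted_sq e \<Longrightarrow> weighted_sq e \<le> s \<Longrightarrow> m \<le> e \<bullet> Q e"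
proof -
  define K where "K = {e. r \<le> weighted_sq e \<and> weighted_sq e \<le> s}"
  show thesis
  proof (cases "K = {}")
    case True thus ?thesis using that[of 1] by (auto simp: K_def)
  next
    case False
    have "closed K" unfolding K_def
      by (intro closed_Collect_conj closed_Collect_le continuous_intros continuous_on_weighted_sq)
    moreover have "bounded K" unfolding bounded_iff
    proof (intro exI ballI)
      fix e assume "e \<in> K"
      hence "wmin * (norm e)\<^sup>2 \<le> s" using weighted_sq_ge[of e] unfolding K_def by auto
      hence "(norm e)\<^sup>2 \<le> s / wmin" using wmin_pos by (simp add: field_simps)
      thus "norm e \<le> sqrt (s / wmin)" by (simp add: real_le_rsqrt)
    qed
    moreover have "continuous_on K (\<lambda>e. e \<bullet> Q e)"
      by (intro continuous_intros continuous_on_subset[OF continuous_Q]) auto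
    ultimately obtain e0 where e0: "e0 \<in> K" "\<And>e. e \<in> K \<Longrightarrow> e0 \<bullet> Q e0 \<le> e \<bullet> Q e"
      using continuous_attains_inf[of K] False compact_eq_bounded_closed by metis
    have "e0 \<noteq> 0" using e0(1) assms weighted_sq_0 unfolding K_def by auto
    thus ?thesis using that[of "e0 \<bullet> Q e0"] inner_Q_pos e0 by (auto simp: K_def)
  qed
qed

lemma rate_pos: assumes "\<rho> > 0" shows "rate \<rho> > 0"
proof -
  obtain m where m: "m > 0" "\<And>e. \<rho>/4 \<le> weighted_sq e \<Longrightarrow> weighted_sq e \<le> 3*\<rho>/2 \<Longrightarrow> m \<le> e \<bullet> Q e"
    using inner_Q_bounded_below_on_shell[of "\<rho>/4" "3*\<rho>/2"] assms by auto
  define b where "b = min (\<rho>/2) (min (lam * \<rho> / 4) (2 * m))"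
  have "b \<le> penalized \<rho> (e, u)" if u: "u \<ge> 0" for e u
  proof (cases "\<bar>weighted_sq e + u - \<rho>\<bar> \<ge> \<rho>/2")
    case True
    have "b \<le> \<rho>/2" unfolding b_def by simp
    thus ?thesis using True dissipation_nonneg[OF u, of e] unfolding penalized_def by simp
  next
    case near: False
    show ?thesis
    proof (cases "u \<ge> \<rho>/4")
      case True
      hence "lam * \<rho> / 4 \<le> lam * u" using lam_pos by simp
      hence "lam * \<rho> / 4 \<le> dissipation e u"
        unfolding dissipation_def using inner_Q_nonneg[of e] by simp
      moreover have "b \<le> lam * \<rho> / 4" unfolding b_def by simp
      ultimately show ?thesis unfolding penalized_def by simp
    next
      case False
      hence "m \<le> e \<bullet> Q e" using m near u by (intro m(2)) (auto simp: abs_if split: if_splits)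
      hence "2 * m \<le> dissipation e u" unfolding dissipation_def using u lam_pos by (simp add: add_increasing2)
      moreover have "b \<le> 2 * m" unfolding b_def by simp
      ultimately show ?thesis unfolding penalized_def by simp
    qed
  qed
  hence "b \<le> rate \<rho>" unfolding rate_def by (intro cInf_greatest[OF penalized_image_ne]) auto
  moreover have "b > 0" unfolding b_def using assms lam_pos m by auto
  ultimately show ?thesis by simp
qed

lemma rate_uniformly_pos:
  assumes "0 < a" "a \<le> b" shows "\<exists>m>0. \<forall>\<rho>\<in>{a..b}. m \<le> rate \<rho>"
proof -
  obtain \<rho>m where "\<rho>m \<in> {a..b}" "\<forall>\<rho>\<in>{a..b}. rate \<rho>m \<le> rate \<rho>"
    using continuous_attains_inf[of "{a..b}" rate] continuous_on_rate assms by auto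
  thus ?thesis using rate_pos[of \<rho>m] assms by auto
qed

lemma decay_rate: "decay_rate rate"
  by unfold_locales (auto intro: continuous_on_rate rate_pos rate_le_self)

end

lemma has_derivative_along_line:
  fixes g :: "'b::real_normed_vector \<Rightarrow> real"
  assumes "(g has_derivative G) (at x)"
  shows "((\<lambda>s. g (x + s *\<^sub>R v)) has_real_derivative G v) (at 0)"
proof -
  have lin: "linear G" using has_derivative_bounded_linear[OF assms] bounded_linear.linear by blast
  have i: "((\<lambda>s. x + s *\<^sub>R v) has_derivative (\<lambda>s. s *\<^sub>R v)) (at 0)"
    by (auto intro!: derivative_eq_intros)
  have "((\<lambda>s. g (x + s *\<^sub>R v)) has_derivative (\<lambda>s. G (s *\<^sub>R v))) (at 0)"
    by (rule has_derivative_compose[OF i]) (simp add: assms)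
  hence "((\<lambda>s. g (x + s *\<^sub>R v)) has_derivative (\<lambda>s. G v * s)) (at 0)"
    using linear_scale[OF lin] by (simp add: mult.commute)
  thus ?thesis by (simp add: has_field_derivative_def)
qed

lemma partial_deriv_eq:
  assumes "(g has_derivative G) (at x)"
  shows "partial_deriv g b x = G (axis b 1)"
  unfolding partial_deriv_def using has_derivative_along_line[OF assms] by (rule DERIV_imp_deriv)

lemma partial_deriv_eq_0:
  assumes "\<not> depends_on g b"
  shows "partial_deriv g b x = 0"
proof -
  have "g (x + s *\<^sub>R axis b 1) = g x" for s
  proof -
    have "\<forall>e. e \<noteq> b \<longrightarrow> (x + s *\<^sub>R axis b 1)$e = x$e" by (simp add: axis_def)
    thus ?thesis using assms unfolding depends_on_def by blast
  qed
  hence "(\<lambda>s. g (x + s *\<^sub>R axis b 1)) = (\<lambda>s. g x)" by auto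
  thus ?thesis unfolding partial_deriv_def by simp
qed

lemma coalition_cost_has_derivative:
  assumes "\<And>a. (f a has_derivative G a) (at x)"
  shows "(coalition_cost f c i has_derivative (\<lambda>h. \<Sum>a\<in>{a. c a = i}. G a h)) (at x)"
  unfolding coalition_cost_def[abs_def]
  by (rule has_derivative_sum) (use assms in auto)

lemma has_derivative_blinfun_along_curve:
  fixes Df :: "real^'a::finite \<Rightarrow> ((real^'a) \<Rightarrow>\<^sub>L real)"
  assumes D2: "(Df has_derivative blinfun_apply (D2 (x t))) (at (x t))"
    and x_dot: "(x has_vector_derivative x') (at t within S)"
  shows "((\<lambda>t. blinfun_apply (Df (x t)) v) has_real_derivative blinfun_apply (blinfun_apply (D2 (x t)) x') v) (at t within S)"
proof -
  have "((\<lambda>t. Df (x t)) has_derivative (\<lambda>h. blinfun_apply (D2 (x t)) (h *\<^sub>R x'))) (at t within S)"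
    using has_derivative_compose[OF x_dot[unfolded has_vector_derivative_def] D2] .
  hence "((\<lambda>t. blinfun_apply (Df (x t)) v) has_derivative (\<lambda>h. blinfun_apply (blinfun_apply (D2 (x t)) (h *\<^sub>R x')) v)) (at t within S)"
    using bounded_linear.has_derivative[OF blinfun.bounded_linear_left] by blast
  hence "((\<lambda>t. blinfun_apply (Df (x t)) v) has_derivative (\<lambda>h. blinfun_apply (blinfun_apply (D2 (x t)) x') v * h)) (at t within S)"
    by (simp add: blinfun.scaleR_right blinfun.scaleR_left mult.commute)
  thus ?thesis by (simp add: has_field_derivative_def)
qed

lemma continuous_on_blinfun_apply:
  fixes Df :: "real^'a::finite \<Rightarrow> ((real^'a) \<Rightarrow>\<^sub>L real)"
  assumes "\<And>x. (Df has_derivative blinfun_apply (D2 x)) (at x)"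
  shows "continuous_on S (\<lambda>x. blinfun_apply (Df x) v)"
proof -
  have "isCont Df x" for x using has_derivative_continuous[OF assms] .
  hence "continuous_on UNIV Df" by (simp add: continuous_at_imp_continuous_on)
  hence "continuous_on UNIV (\<lambda>x. blinfun_apply (Df x) v)"
    by (auto intro!: continuous_intros)
  thus ?thesis by (rule continuous_on_subset) auto
qed

definition vec_on :: "'a::finite set \<Rightarrow> ('a \<Rightarrow> real) \<Rightarrow> real^'a" where
  "vec_on S h = (\<chi> j. if j \<in> S then h j else 0)"

lemma inner_vec_on: "vec_on S h \<bullet> vec_on S k = (\<Sum>j\<in>S. h j * k j)"
proof -
  have "vec_on S h \<bullet> vec_on S k = (\<Sum>j\<in>UNIV. (if j \<in> S then h j * k j else 0))"
    unfolding vec_on_def inner_vec_def by (intro sum.cong) auto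
  also have "\<dots> = (\<Sum>j\<in>S. h j * k j)" by (simp add: sum.If_cases)
  finally show ?thesis .
qed

lemma norm_vec_on: "(norm (vec_on S h))\<^sup>2 = (\<Sum>j\<in>S. (h j)\<^sup>2)"
  unfolding power2_norm_eq_inner inner_vec_on by (simp add: power2_eq_square)

lemma vec_on_nth: "vec_on S h $ j = (if j \<in> S then h j else 0)" unfolding vec_on_def by simp

lemma dim_vanishing_outside: "dim {x::real^'a::finite. \<forall>i. i \<notin> S \<longrightarrow> x$i = 0} = card S"
proof -
  define d where "d = (\<lambda>i. axis i (1::real)) ` S"
  have dB: "d \<subseteq> Basis" unfolding d_def by (auto simp: axis_in_Basis_iff)
  have eq: "{x::real^'a. \<forall>i. i \<notin> S \<longrightarrow> x$i = 0} = {x. \<forall>i\<in>Basis. i \<notin> d \<longrightarrow> x \<bullet> i = 0}"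
  proof -
    have "(\<forall>i. i \<notin> S \<longrightarrow> x$i = 0) \<longleftrightarrow> (\<forall>i\<in>Basis. i \<notin> d \<longrightarrow> x \<bullet> i = 0)" for x :: "real^'a"
      unfolding d_def Basis_vec_def Basis_real_def by (auto simp: inner_axis axis_eq_axis)
    thus ?thesis by auto
  qed
  have "card d = card S" unfolding d_def by (rule card_image) (auto simp: inj_on_def axis_eq_axis)
  thus ?thesis using eq dim_substandard[OF dB] by simp
qed

lemma inner_self_eq_sum_orthonormal:
  assumes "\<And>b b'. b \<in> B \<Longrightarrow> b' \<in> B \<Longrightarrow> b \<bullet> b' = (if b = b' then 1 else 0)"
    and "x \<in> span B" "finite B"
  shows "x \<bullet> x = (\<Sum>b\<in>B. (x \<bullet> b)\<^sup>2)"
proof -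
  have "pairwise orthogonal B" "\<And>b. b \<in> B \<Longrightarrow> norm b = 1"
    using assms(1) by (auto simp: pairwise_def orthogonal_def norm_eq_1)
  hence "x \<bullet> x = x \<bullet> (\<Sum>b\<in>B. (x \<bullet> b) *\<^sub>R b)" using orthonormal_basis_expand assms(2,3) by metis
  thus ?thesis by (simp add: inner_sum_right power2_eq_square)
qed

lemma orthonormal_spans_vanishing_outside:
  fixes B :: "(real^'a::finite) set"
  assumes orthonormal: "\<And>b b'. b \<in> B \<Longrightarrow> b' \<in> B \<Longrightarrow> b \<bullet> b' = (if b = b' then 1 else 0)"
    and "finite B" "card B = card S" and B: "\<And>b i. b \<in> B \<Longrightarrow> i \<notin> S \<Longrightarrow> b $ i = 0"
    and x: "\<And>i. i \<notin> S \<Longrightarrow> x $ i = 0"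
  shows "x \<in> span B"
proof -
  define V where "V = {x::real^'a. \<forall>i. i \<notin> S \<longrightarrow> x$i = 0}"
  have "independent B"
  proof (rule pairwise_orthogonal_independent)
    show "pairwise orthogonal B" unfolding pairwise_def orthogonal_def using orthonormal by auto
    show "0 \<notin> B" using orthonormal by force
  qed
  moreover have "B \<subseteq> V" using B unfolding V_def by auto
  ultimately have "V \<subseteq> span B"
    using eucl.card_eq_dim[of B V] dim_vanishing_outside[of S] assms(2,3) unfolding V_def by simp
  thus ?thesis using x unfolding V_def by auto
qed

text \<open>The rows \<open>r p\<close> together with the normalised constant vector form an orthonormal basis of
  the coordinate space on \<open>S\<close>; \<open>D\<close> is orthogonal to the constant vector, so Parseval's identity
  on this basis loses no mass.\<close>

lemma sum_sq_orthonormal_projections: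
  fixes S :: "'a::finite set" and r :: "nat \<Rightarrow> 'a \<Rightarrow> real" and D :: "'a \<Rightarrow> real"
  assumes orth: "\<And>p q. p < card S - 1 \<Longrightarrow> q < card S - 1 \<Longrightarrow> (\<Sum>j\<in>S. r p j * r q j) = (if p = q then 1 else 0)"
    and zs: "\<And>p. p < card S - 1 \<Longrightarrow> (\<Sum>j\<in>S. r p j) = 0"
    and D0: "(\<Sum>j\<in>S. D j) = 0" and ne: "S \<noteq> {}"
  shows "(\<Sum>p<card S - 1. (\<Sum>j\<in>S. r p j * D j)\<^sup>2) = (\<Sum>j\<in>S. (D j)\<^sup>2)"
proof -
  define n where "n = card S"
  have n1: "n \<ge> 1" using ne unfolding n_def by (simp add: Suc_leI card_gt_0_iff)
  define u where "u p = vec_on S (r p)" for p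
  define ov where "ov = vec_on S (\<lambda>_. 1 / sqrt n)"
  define B where "B = u ` {..<n-1} \<union> {ov}"
  define x where "x = vec_on S D"
  have uu: "u p \<bullet> u q = (if p = q then 1 else 0)" if "p < n - 1" "q < n - 1" for p q
    unfolding u_def inner_vec_on using orth that n_def by simp
  have uo: "u p \<bullet> ov = 0" if "p < n - 1" for p
    unfolding u_def ov_def inner_vec_on using zs[of p] that n_def by (simp add: sum_divide_distrib[symmetric])
  have oo: "ov \<bullet> ov = 1" unfolding ov_def inner_vec_on using n1 n_def ne
    by (simp add: real_sqrt_mult[symmetric])
  have inj: "inj_on u {..<n-1}"
  proof (rule inj_onI)
    fix p q assume "p \<in> {..<n-1}" "q \<in> {..<n-1}" "u p = u q"
    thus "p = q" using uu[of p q] uu[of p p] by (auto split: if_splits)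
  qed
  have onot: "ov \<notin> u ` {..<n-1}" using uo oo by force
  have orthonormal: "b \<bullet> b' = (if b = b' then 1 else 0)" if "b \<in> B" "b' \<in> B" for b b'
    using that uu uo oo unfolding B_def by (auto simp: inner_commute)
  have "card B = n"
    unfolding B_def using onot card_image[OF inj] n1 by (simp add: card_insert_if)
  hence "x \<in> span B"
    by (intro orthonormal_spans_vanishing_outside[OF orthonormal])
       (auto simp: B_def n_def x_def u_def ov_def vec_on_def)
  hence "x \<bullet> x = (\<Sum>b\<in>B. (x \<bullet> b)\<^sup>2)"
    by (intro inner_self_eq_sum_orthonormal[OF orthonormal]) (auto simp: B_def)
  also have "\<dots> = (\<Sum>b\<in>u ` {..<n-1}. (x \<bullet> b)\<^sup>2) + (x \<bullet> ov)\<^sup>2"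
    unfolding B_def using onot by (simp add: sum.union_disjoint)
  also have "x \<bullet> ov = 0" unfolding x_def ov_def inner_vec_on using D0 by (simp add: sum_divide_distrib[symmetric])
  also have "(\<Sum>b\<in>u ` {..<n-1}. (x \<bullet> b)\<^sup>2) = (\<Sum>p<n-1. (x \<bullet> u p)\<^sup>2)"
    by (rule sum.reindex[OF inj, unfolded comp_def])
  finally have "x \<bullet> x = (\<Sum>p<n-1. (\<Sum>j\<in>S. r p j * D j)\<^sup>2)"
    unfolding x_def u_def inner_vec_on by (simp add: mult.commute)
  moreover have "x \<bullet> x = (\<Sum>j\<in>S. (D j)\<^sup>2)" unfolding x_def inner_vec_on by (simp add: power2_eq_square)
  ultimately show ?thesis unfolding n_def by simp
qed

lemma graph_connected_imp_const:
  assumes conn: "graph_connected S E" and eq: "\<And>j l. j \<in> S \<Longrightarrow> l \<in> S \<Longrightarrow> E j l \<Longrightarrow> h j = h l"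
    and uv: "u \<in> S" "v \<in> S"
  shows "h u = h v"
proof -
  have "(u, v) \<in> {(x, y). x \<in> S \<and> y \<in> S \<and> E x y}\<^sup>*" using conn uv unfolding graph_connected_def by blast
  thus ?thesis
  proof (induction rule: rtrancl_induct)
    case base then show ?case by simp
  next
    case (step y z) then show ?case using eq by auto
  qed
qed

lemma laplacian_form_eq_0_imp_const:
  fixes A :: "'a \<Rightarrow> 'a \<Rightarrow> real"
  assumes conn: "graph_connected S (\<lambda>u v. A u v > 0)" and nonneg: "\<And>a b. A a b \<ge> 0" and "finite S"
    and zero: "(\<Sum>j\<in>S. \<Sum>l\<in>S. A j l * (D j - D l)\<^sup>2) = 0" and uv: "u \<in> S" "v \<in> S"
  shows "D u = D v"
proof (rule graph_connected_imp_const[OF conn _ uv])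
  fix j l assume jl: "j \<in> S" "l \<in> S" "A j l > 0"
  have "\<forall>j\<in>S. (\<Sum>l\<in>S. A j l * (D j - D l)\<^sup>2) = 0"
    using zero \<open>finite S\<close>
    by (subst sum_nonneg_eq_0_iff[symmetric]) (auto intro!: sum_nonneg mult_nonneg_nonneg nonneg)
  hence "\<forall>l\<in>S. A j l * (D j - D l)\<^sup>2 = 0"
    using jl \<open>finite S\<close> by (subst sum_nonneg_eq_0_iff[symmetric]) (auto intro!: mult_nonneg_nonneg nonneg)
  thus "D j = D l" using jl by auto
qed

lemma laplacian_form_lower_bound_on_sphere:
  fixes S :: "'a::finite set" and A :: "'a \<Rightarrow> 'a \<Rightarrow> real"
  assumes conn: "graph_connected S (\<lambda>u v. A u v > 0)" and nonneg: "\<And>a b. A a b \<ge> 0"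
  obtains lg where "lg > 0" and "\<And>x::real^'a. (\<forall>i. i \<notin> S \<longrightarrow> x$i = 0) \<Longrightarrow> (\<Sum>j\<in>S. x$j) = 0 \<Longrightarrow>
      norm x = 1 \<Longrightarrow> lg \<le> (\<Sum>j\<in>S. \<Sum>l\<in>S. A j l * (x$j - x$l)\<^sup>2)"
proof -
  define Qf where "Qf x = (\<Sum>j\<in>S. \<Sum>l\<in>S. A j l * (x$j - x$l)\<^sup>2)" for x :: "real^'a"
  define K where "K = {x::real^'a. (\<forall>i. i \<notin> S \<longrightarrow> x$i = 0) \<and> (\<Sum>j\<in>S. x$j) = 0 \<and> norm x = 1}"
  have Qpos: "0 < Qf x" if x: "x \<in> K" for x
  proof (rule ccontr)
    assume "\<not> 0 < Qf x"
    moreover have "0 \<le> Qf x" unfolding Qf_def using nonneg by (intro sum_nonneg mult_nonneg_nonneg) auto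
    ultimately have Q0: "Qf x = 0" by simp
    have "S \<noteq> {}"
    proof
      assume "S = {}"
      hence "x = 0" using x unfolding K_def by (simp add: vec_eq_iff)
      thus False using x unfolding K_def by simp
    qed
    then obtain u where u: "u \<in> S" by blast
    have const: "x$v = x$u" if "v \<in> S" for v
      using laplacian_form_eq_0_imp_const[OF conn nonneg _ _ that u, of "\<lambda>j. x$j"] Q0
      unfolding Qf_def by simp
    have "(\<Sum>j\<in>S. x$j) = card S * x$u" using const by simp
    hence "x$u = 0" using x \<open>S \<noteq> {}\<close> unfolding K_def by simp
    hence "x = 0" using const x unfolding K_def by (auto simp: vec_eq_iff)
    thus False using x unfolding K_def by simp
  qed
  show thesis
  proof (cases "K = {}")
    case True thus thesis using that[of 1] unfolding K_def by auto
  next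
    case False
    have "closed K" unfolding K_def
      by (intro closed_Collect_conj closed_Collect_all closed_Collect_imp closed_Collect_eq)
         (auto intro!: continuous_intros)
    moreover have "bounded K" unfolding bounded_iff K_def by auto
    ultimately have "compact K" by (simp add: compact_eq_bounded_closed)
    moreover have "continuous_on K Qf" unfolding Qf_def by (intro continuous_intros)
    ultimately obtain x0 where "x0 \<in> K" "\<And>x. x \<in> K \<Longrightarrow> Qf x0 \<le> Qf x"
      using continuous_attains_inf[OF _ False] by blast
    thus thesis using that[of "Qf x0"] Qpos unfolding K_def Qf_def by blast
  qed
qed

text \<open>Algebraic connectivity: on functions with zero sum over \<open>S\<close>, the Laplacian quadratic form
  of a connected graph dominates a positive multiple of the squared norm (by homogeneity from the
  unit sphere, where the form attains a positive minimum).\<close>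

lemma laplacian_spectral_gap:
  fixes S :: "'a::finite set" and A :: "'a \<Rightarrow> 'a \<Rightarrow> real"
  assumes conn: "graph_connected S (\<lambda>u v. A u v > 0)" and nonneg: "\<And>a b. A a b \<ge> 0"
  shows "\<exists>lg>0. \<forall>D. (\<Sum>j\<in>S. D j) = 0 \<longrightarrow> lg * (\<Sum>j\<in>S. (D j)\<^sup>2) \<le> (\<Sum>j\<in>S. \<Sum>l\<in>S. A j l * (D j - D l)\<^sup>2)"
proof -
  define Qf where "Qf x = (\<Sum>j\<in>S. \<Sum>l\<in>S. A j l * (x$j - x$l)\<^sup>2)" for x :: "real^'a"
  obtain lg where lg: "lg > 0" "\<And>x::real^'a. (\<forall>i. i \<notin> S \<longrightarrow> x$i = 0) \<Longrightarrow> (\<Sum>j\<in>S. x$j) = 0 \<Longrightarrow>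
      norm x = 1 \<Longrightarrow> lg \<le> Qf x"
    using laplacian_form_lower_bound_on_sphere[OF conn nonneg] unfolding Qf_def by blast
  have QvS: "Qf (vec_on S D) = (\<Sum>j\<in>S. \<Sum>l\<in>S. A j l * (D j - D l)\<^sup>2)" for D
    unfolding Qf_def vec_on_nth by (intro sum.cong) auto
  have Qscale: "Qf (c *\<^sub>R x) = c\<^sup>2 * Qf x" for c x
  proof -
    have "(c * x $ j - c * x $ l)\<^sup>2 = c\<^sup>2 * (x $ j - x $ l)\<^sup>2" for j l
      by (simp add: power_mult_distrib[symmetric] right_diff_distrib)
    thus ?thesis unfolding Qf_def by (simp add: sum_distrib_left algebra_simps)
  qed
  have "lg * (\<Sum>j\<in>S. (D j)\<^sup>2) \<le> (\<Sum>j\<in>S. \<Sum>l\<in>S. A j l * (D j - D l)\<^sup>2)" if D0: "(\<Sum>j\<in>S. D j) = 0" for D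
  proof (cases "vec_on S D = 0")
    case True
    hence "(\<Sum>j\<in>S. (D j)\<^sup>2) = 0" using norm_vec_on[of S D] by simp
    moreover have "0 \<le> (\<Sum>j\<in>S. \<Sum>l\<in>S. A j l * (D j - D l)\<^sup>2)"
      using nonneg by (intro sum_nonneg mult_nonneg_nonneg) auto
    ultimately show ?thesis by simp
  next
    case False
    hence ny: "norm (vec_on S D) > 0" by simp
    have "lg \<le> Qf ((1 / norm (vec_on S D)) *\<^sub>R vec_on S D)" using D0 ny
      by (intro lg(2)) (auto simp: vec_on_nth sum_divide_distrib[symmetric])
    also have "\<dots> = Qf (vec_on S D) / (norm (vec_on S D))\<^sup>2" unfolding Qscale by (simp add: power_divide)
    finally have "lg * (norm (vec_on S D))\<^sup>2 \<le> Qf (vec_on S D)" using ny by (simp add: field_simps)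
    thus ?thesis using norm_vec_on[of S D] QvS by simp
  qed
  thus ?thesis using lg(1) by blast
qed

text \<open>The game of the theorem, with assumption A1 realised by chosen first and second derivatives
  \<open>Df\<close>, \<open>D2f\<close> of the local costs. \<open>nb k\<close> is the vertex set \<open>N\<^sub>I\<^sub>k \<union> {k}\<close> of the
  interference-to-\<open>k\<close> communication graph and \<open>nk k\<close> its size.\<close>

locale game =
  fixes N :: nat and j0 :: nat and c :: "'a::finite \<Rightarrow> nat"
    and f :: "'a \<Rightarrow> real^'a \<Rightarrow> real" and A :: "'a \<Rightarrow> 'a \<Rightarrow> real"
    and dbar :: "'a \<Rightarrow> real" and xs :: "real^'a" and R :: "'a \<Rightarrow> 'a \<Rightarrow> nat \<Rightarrow> real"
    and Df :: "'a \<Rightarrow> real^'a \<Rightarrow> ((real^'a) \<Rightarrow>\<^sub>L real)"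
    and D2f :: "'a \<Rightarrow> real^'a \<Rightarrow> ((real^'a) \<Rightarrow>\<^sub>L ((real^'a) \<Rightarrow>\<^sub>L real))"
  assumes Df: "\<And>a x. (f a has_derivative blinfun_apply (Df a x)) (at x)"
    and D2f: "\<And>a x. (Df a has_derivative blinfun_apply (D2f a x)) (at x)"
    and D2cont: "\<And>a. continuous_on UNIV (D2f a)"
    and coal: "\<forall>a. c a < N"
    and mj0: "card {a. c a = j0} = 1"
    and A2: "\<forall>x y. x \<noteq> y \<longrightarrow> (x - y) \<bullet> (pseudo_gradient f c x - pseudo_gradient f c y) > 0"
    and NE: "is_NE N f c xs"
    and A_sym: "\<forall>a b. A a b = A b a" and A_nonneg: "\<forall>a b. A a b \<ge> 0"
    and GC_conn: "\<forall>k. c k \<noteq> j0 \<longrightarrow> graph_connected (nbhd f c k) (\<lambda>u v. A u v > 0)"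
    and dbar_pos: "\<forall>a. dbar a > 0"
    and Rv: "valid_R f c R"
begin

abbreviation nb where "nb k \<equiv> nbhd f c k"
abbreviation P where "P \<equiv> pseudo_gradient f c"
definition nk :: "'a \<Rightarrow> real" where "nk k = real (card (nb k))"

lemma interf_sym: "interf f c a b \<longleftrightarrow> interf f c b a"
  unfolding interf_def by auto

lemma nb_self: "k \<in> nb k" unfolding nbhd_def by simp
lemma nb_sym: "j \<in> nb k \<longleftrightarrow> k \<in> nb j" unfolding nbhd_def using interf_sym by auto
lemma nb_coal: "j \<in> nb k \<Longrightarrow> c j = c k" unfolding nbhd_def interf_def by auto
lemma nb_ne: "nb k \<noteq> {}" using nb_self by auto
lemma nk_ge1: "nk k \<ge> 1" unfolding nk_def using nb_ne by (simp add: Suc_leI card_gt_0_iff)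
lemma nk_pos: "nk k > 0" using nk_ge1[of k] by simp
lemma nk_le: "nk k \<le> real CARD('a)" unfolding nk_def by (simp add: card_mono)

lemma nb_singleton_coalition: assumes "c k = j0" shows "nb k = {k}"
proof -
  have "\<not> interf f c k b" for b
  proof
    assume "interf f c k b"
    hence "b \<noteq> k" "c b = j0" using assms unfolding interf_def by auto
    hence "{k, b} \<subseteq> {a. c a = j0}" using assms by auto
    hence "card {k, b} \<le> 1" using mj0 card_mono[of "{a. c a = j0}"] by simp
    thus False using \<open>b \<noteq> k\<close> by simp
  qed
  thus ?thesis unfolding nbhd_def by auto
qed

lemma partial_deriv_Df: "partial_deriv (f j) k x = Df j x (axis k 1)"
  by (rule partial_deriv_eq[OF Df])

lemma P_nth: "P x $ k = (\<Sum>j\<in>nb k. Df j x (axis k 1))"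
proof -
  have "P x $ k = partial_deriv (coalition_cost f c (c k)) k x"
    unfolding pseudo_gradient_def by simp
  also have "\<dots> = (\<Sum>a\<in>{a. c a = c k}. Df a x (axis k 1))"
    by (rule partial_deriv_eq[OF coalition_cost_has_derivative[OF Df]])
  also have "\<dots> = (\<Sum>j\<in>nb k. Df j x (axis k 1))"
  proof (rule sum.mono_neutral_right)
    show "nb k \<subseteq> {a. c a = c k}" using nb_coal by auto
    show "\<forall>a\<in>{a. c a = c k} - nb k. Df a x (axis k 1) = 0"
    proof
      fix a assume a: "a \<in> {a. c a = c k} - nb k"
      hence "\<not> depends_on (f a) k" unfolding nbhd_def interf_def by auto
      thus "Df a x (axis k 1) = 0" using partial_deriv_eq_0[of "f a" k x] partial_deriv_Df by simp
    qed
  qed auto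
  finally show ?thesis .
qed

lemma P_eq: "P x = (\<chi> k. \<Sum>j\<in>nb k. Df j x (axis k 1))"
  by (simp add: vec_eq_iff P_nth)

lemma continuous_on_P: "continuous_on S P"
  unfolding P_eq
  by (intro continuous_on_vec_lambda continuous_on_sum continuous_on_blinfun_apply[OF D2f])

lemma P_equilibrium: "P xs = 0"
proof -
  have "P xs $ k = 0" for k
  proof -
    define i where "i = c k"
    have G: "(coalition_cost f c i has_derivative (\<lambda>h. \<Sum>a\<in>{a. c a = i}. Df a xs h)) (at xs)"
      by (rule coalition_cost_has_derivative[OF Df])
    have d: "((\<lambda>s. coalition_cost f c i (xs + s *\<^sub>R axis k 1)) has_real_derivative (\<Sum>a\<in>{a. c a = i}. Df a xs (axis k 1))) (at 0)"
      using has_derivative_along_line[OF G] .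
    have mn: "\<forall>y. \<bar>0 - y\<bar> < 1 \<longrightarrow> coalition_cost f c i (xs + 0 *\<^sub>R axis k 1) \<le> coalition_cost f c i (xs + y *\<^sub>R axis k 1)"
    proof (intro allI impI)
      fix s :: real
      have "\<forall>a. c a \<noteq> i \<longrightarrow> (xs + s *\<^sub>R axis k 1) $ a = xs $ a"
        unfolding i_def by (auto simp: axis_def)
      moreover have "i < N" unfolding i_def using coal by auto
      ultimately show "coalition_cost f c i (xs + 0 *\<^sub>R axis k 1) \<le> coalition_cost f c i (xs + s *\<^sub>R axis k 1)"
        using NE unfolding is_NE_def by auto
    qed
    have "(\<Sum>a\<in>{a. c a = i}. Df a xs (axis k 1)) = 0"
      using DERIV_local_min[OF d _ mn] by simp
    moreover have "P xs $ k = partial_deriv (coalition_cost f c i) k xs"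
      unfolding pseudo_gradient_def i_def by simp
    ultimately show ?thesis using partial_deriv_eq[OF G] by simp
  qed
  thus ?thesis by (simp add: vec_eq_iff)
qed

lemma inner_P_pos: "e \<noteq> 0 \<Longrightarrow> e \<bullet> P (xs + e) > 0"
  using A2[rule_format, of "xs + e" xs] P_equilibrium by simp

definition has_gap :: "'a \<Rightarrow> real \<Rightarrow> bool" where
  "has_gap k lg \<longleftrightarrow> (\<forall>D. (\<Sum>j\<in>nb k. D j) = 0 \<longrightarrow>
     lg * (\<Sum>j\<in>nb k. (D j)\<^sup>2) \<le> (\<Sum>j\<in>nb k. \<Sum>l\<in>nb k. A j l * (D j - D l)\<^sup>2))"

lemma has_gap_mono: "has_gap k lg \<Longrightarrow> lg' \<le> lg \<Longrightarrow> has_gap k lg'"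
  unfolding has_gap_def by (meson mult_right_mono order_trans sum_nonneg zero_le_power2)

lemma uniform_spectral_gap: "\<exists>lg>0. \<forall>k. has_gap k lg"
proof -
  have "\<exists>lg>0. has_gap k lg" for k
  proof -
    have "graph_connected (nb k) (\<lambda>u v. A u v > 0)"
    proof (cases "c k = j0")
      case True thus ?thesis using nb_singleton_coalition[OF True] unfolding graph_connected_def by auto
    next
      case False thus ?thesis using GC_conn by auto
    qed
    thus ?thesis unfolding has_gap_def by (rule laplacian_spectral_gap) (use A_nonneg in auto)
  qed
  then obtain lgk where lgk: "\<And>k. lgk k > 0" "\<And>k. has_gap k (lgk k)" by metis
  have "has_gap k (Min (range lgk))" for k by (rule has_gap_mono[OF lgk(2)]) simp
  moreover have "Min (range lgk) > 0" using lgk(1) by simp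
  ultimately show ?thesis by blast
qed

definition lam :: real where "lam = (SOME lg. lg > 0 \<and> (\<forall>k. has_gap k lg))"

lemma lam_pos: "lam > 0" and lam_gap: "(\<Sum>j\<in>nb k. D j) = 0 \<Longrightarrow>
    lam * (\<Sum>j\<in>nb k. (D j)\<^sup>2) \<le> (\<Sum>j\<in>nb k. \<Sum>l\<in>nb k. A j l * (D j - D l)\<^sup>2)"
  using someI_ex[OF uniform_spectral_gap, folded lam_def] unfolding has_gap_def by auto

definition wt :: "'a \<Rightarrow> real" where "wt a = nk a / dbar a"
lemma wt_pos: "wt a > 0" unfolding wt_def using nk_pos dbar_pos by simp

end

lemma two_mult_le_weighted_squares: assumes "e > 0" shows "2 * a * b \<le> e * a\<^sup>2 + b\<^sup>2 / (e::real)"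
proof -
  have "0 \<le> (e * a - b)\<^sup>2 / e" using assms by simp
  also have "(e * a - b)\<^sup>2 / e = e * a\<^sup>2 + b\<^sup>2 / e - 2 * a * b"
    using assms by (simp add: power2_eq_square field_simps)
  finally show ?thesis by simp
qed

lemma sum_sum_antisym_eq_0:
  fixes A :: "'a \<Rightarrow> 'a \<Rightarrow> real"
  assumes "\<forall>a b. A a b = A b a"
  shows "(\<Sum>j\<in>S. \<Sum>l\<in>S. A j l * (h j - h l)) = 0"
proof -
  have "(\<Sum>j\<in>S. \<Sum>l\<in>S. A j l * h l) = (\<Sum>l\<in>S. \<Sum>j\<in>S. A j l * h l)" by (rule sum.swap)
  also have "\<dots> = (\<Sum>j\<in>S. \<Sum>l\<in>S. A j l * h j)" using assms by (metis (no_types, lifting) sum.cong)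
  finally show ?thesis by (simp add: right_diff_distrib sum_subtractf)
qed

lemma laplacian_quadratic_form:
  fixes A :: "'a \<Rightarrow> 'a \<Rightarrow> real"
  assumes "\<forall>a b. A a b = A b a"
  shows "(\<Sum>j\<in>S. \<Sum>l\<in>S. A j l * (D j - D l)\<^sup>2) = 2 * (\<Sum>j\<in>S. D j * (\<Sum>l\<in>S. A j l * (D j - D l)))"
proof -
  have sq: "A j l * (D j - D l)\<^sup>2 = D j * (A j l * (D j - D l)) + D l * (A l j * (D l - D j))" for j l
    using assms by (simp add: power2_eq_square algebra_simps)
  have "(\<Sum>j\<in>S. \<Sum>l\<in>S. A j l * (D j - D l)\<^sup>2) =
        (\<Sum>j\<in>S. \<Sum>l\<in>S. D j * (A j l * (D j - D l))) + (\<Sum>j\<in>S. \<Sum>l\<in>S. D l * (A l j * (D l - D j)))"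
    unfolding sq by (simp add: sum.distrib)
  also have "(\<Sum>j\<in>S. \<Sum>l\<in>S. D l * (A l j * (D l - D j))) = (\<Sum>l\<in>S. \<Sum>j\<in>S. D l * (A l j * (D l - D j)))"
    by (rule sum.swap)
  finally show ?thesis by (simp add: sum_distrib_left)
qed

lemma abs_le_1_plus_sq: "\<bar>z::real\<bar> \<le> 1 + z\<^sup>2"
proof -
  have "0 \<le> (\<bar>z\<bar> - 1)\<^sup>2" by simp
  hence "2 * \<bar>z\<bar> \<le> 1 + z\<^sup>2" by (simp add: power2_eq_square algebra_simps abs_mult_self_eq)
  thus ?thesis by linarith
qed

context game begin

lemma continuous_on_P_shift: "continuous_on UNIV (\<lambda>e. P (xs + e))"
  by (rule continuous_on_compose2[OF continuous_on_P[of UNIV]]) (auto intro!: continuous_intros)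

text \<open>With \<open>V = weighted_sq (x - xs)\<close> (weights \<open>nk a / dbar a\<close>) and the disagreement \<open>U\<close>, the
  Lyapunov function \<open>W = V + U\<close> dissipates at least \<open>\<delta> (2 e \<bullet> P (xs + e) + lam U / 4)\<close>, up to
  the \<open>\<delta>\<^sup>2\<close> perturbation bounded below on each sublevel set \<open>W \<le> Rb\<close>, whose states lie in
  \<open>cball xs (radius Rb)\<close>.\<close>

sublocale OS: dissipation_rate "\<lambda>e. P (xs + e)" wt "lam/4"
  by unfold_locales (use continuous_on_P_shift inner_P_pos wt_pos lam_pos in auto)

definition radius :: "real \<Rightarrow> real" where "radius Rb = sqrt (Rb / OS.wmin)"

lemma continuous_bounded_on_cball: assumes "continuous_on UNIV h" shows "\<exists>M\<ge>0. \<forall>y\<in>cball xs r. norm (h y :: 'b::real_normed_vector) \<le> M"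
proof -
  have "compact (h ` cball xs r)" by (rule compact_continuous_image[OF continuous_on_subset[OF assms]]) auto
  then obtain M where "\<forall>z\<in>h ` cball xs r. norm z \<le> M" using compact_imp_bounded bounded_iff by metis
  thus ?thesis by (intro exI[of _ "max M 0"]) auto
qed

definition P_bound :: "real \<Rightarrow> real" where "P_bound Rb = (SOME M. M \<ge> 0 \<and> (\<forall>y\<in>cball xs (radius Rb). norm (P y) \<le> M))"
lemma P_bound: "P_bound Rb \<ge> 0" "y \<in> cball xs (radius Rb) \<Longrightarrow> norm (P y) \<le> P_bound Rb"
  using someI_ex[OF continuous_bounded_on_cball[OF continuous_on_P, of "radius Rb"]] unfolding P_bound_def[symmetric] by auto

definition D2f_bound :: "real \<Rightarrow> real" where "D2f_bound Rb = (SOME M. M \<ge> 0 \<and> (\<forall>y\<in>cball xs (radius Rb). norm (\<Sum>j\<in>UNIV. norm (D2f j y)) \<le> M))"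
lemma D2f_bound: "D2f_bound Rb \<ge> 0" "y \<in> cball xs (radius Rb) \<Longrightarrow> norm (D2f j y) \<le> D2f_bound Rb"
proof -
  have c: "continuous_on UNIV (\<lambda>y. \<Sum>j\<in>UNIV. norm (D2f j y))"
    by (intro continuous_intros continuous_on_subset[OF D2cont]) auto
  have H: "D2f_bound Rb \<ge> 0 \<and> (\<forall>y\<in>cball xs (radius Rb). norm (\<Sum>j\<in>UNIV. norm (D2f j y)) \<le> D2f_bound Rb)"
    using someI_ex[OF continuous_bounded_on_cball[OF c, of "radius Rb"]] unfolding D2f_bound_def[symmetric] by auto
  thus "D2f_bound Rb \<ge> 0" by simp
  assume y: "y \<in> cball xs (radius Rb)"
  have "norm (D2f j y) \<le> (\<Sum>j\<in>UNIV. norm (D2f j y))" by (rule member_le_sum) auto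
  also have "\<dots> \<le> D2f_bound Rb"
  proof -
    have "\<bar>\<Sum>j\<in>UNIV. norm (D2f j y)\<bar> \<le> D2f_bound Rb" using H y by simp
    thus ?thesis by linarith
  qed
  finally show "norm (D2f j y) \<le> D2f_bound Rb" .
qed

definition n_agents :: real where "n_agents = real CARD('a)"
definition drift_bound :: "real \<Rightarrow> real" where "drift_bound Rb = (\<Sum>a\<in>UNIV. dbar a * (1 + Rb + P_bound Rb))"
definition perturbation_bound :: "real \<Rightarrow> real" where
  "perturbation_bound Rb = (2/lam) * n_agents\<^sup>2 * (D2f_bound Rb * drift_bound Rb)\<^sup>2 + (4/lam) * n_agents\<^sup>2 * Rb / OS.wmin"

definition wmax :: real where "wmax = Max (range wt)"
lemma wmax_ge: "wt a \<le> wmax" unfolding wmax_def by auto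
definition c0 :: real where "c0 = min OS.wmin 1"
definition c1 :: real where "c1 = max wmax 1"
lemma c0_pos: "c0 > 0" unfolding c0_def using OS.wmin_pos by simp
lemma c1_pos: "c1 > 0" unfolding c1_def by simp

lemma weighted_sq_le: "OS.weighted_sq e \<le> wmax * (norm e)\<^sup>2"
  unfolding norm_power2_cart OS.weighted_sq_def sum_distrib_left
  by (intro sum_mono mult_right_mono wmax_ge) auto

lemma perturbation_bound_nonneg: "Rb \<ge> 0 \<Longrightarrow> perturbation_bound Rb \<ge> 0"
  unfolding perturbation_bound_def using lam_pos OS.wmin_pos by (intro add_nonneg_nonneg mult_nonneg_nonneg divide_nonneg_pos) auto

sublocale decay: decay_rate OS.rate by (rule OS.decay_rate)

end

locale traj = game +
  fixes \<delta> :: real and T :: real and x :: "real \<Rightarrow> real^'a" and w :: "real \<Rightarrow> 'a \<Rightarrow> 'a \<Rightarrow> real"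
  assumes sol: "seeking_solution f c A (\<lambda>a. \<delta> * dbar a) T x w" and dpos: "0 < \<delta>" and dle: "\<delta> \<le> 1"
begin

definition g where "g t j k = gterm f (w t) (x t) j k"
definition x_dot where "x_dot t = (\<chi> a. - (\<delta> * dbar a) * g t a a)"
definition w_dot where "w_dot t j k = - (\<Sum>l\<in>nb k. A j l * (g t j k - g t l k))"
definition hess_term where "hess_term t j k = D2f j (x t) (x_dot t) (axis k 1)"
definition g_dot where "g_dot t j k = w_dot t j k + hess_term t j k"

lemma x_has_derivative: "t \<in> {0..<T} \<Longrightarrow> (x has_vector_derivative x_dot t) (at t within {0..<T})"
  using sol unfolding seeking_solution_def x_dot_def g_def by auto

lemma w_has_derivative: "t \<in> {0..<T} \<Longrightarrow> k \<in> nb j \<Longrightarrow> ((\<lambda>s. w s j k) has_real_derivative w_dot t j k) (at t within {0..<T})"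
  using sol unfolding seeking_solution_def w_dot_def g_def by auto

lemma w_0: "k \<in> nb j \<Longrightarrow> w 0 j k = 0"
  using sol unfolding seeking_solution_def by auto

lemma g_eq: "g t j k = w t j k + Df j (x t) (axis k 1)"
  unfolding g_def gterm_def partial_deriv_Df by simp

lemma g_has_derivative: assumes "t \<in> {0..<T}" "k \<in> nb j"
  shows "((\<lambda>s. g s j k) has_real_derivative g_dot t j k) (at t within {0..<T})"
  unfolding g_eq g_dot_def hess_term_def
  by (intro DERIV_add w_has_derivative[OF assms] has_derivative_blinfun_along_curve[of "Df j" "D2f j", OF D2f x_has_derivative[OF assms(1)]])

lemma x_nth_has_derivative: "t \<in> {0..<T} \<Longrightarrow> ((\<lambda>s. x s $ a) has_real_derivative x_dot t $ a) (at t within {0..<T})"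
  unfolding has_real_derivative_iff_has_vector_derivative
  by (rule bounded_linear.has_vector_derivative[OF bounded_linear_vec_nth x_has_derivative])

lemma sum_w_eq_0: assumes t: "t \<in> {0..<T}" shows "(\<Sum>j\<in>nb k. w t j k) = 0"
proof -
  have "\<exists>C. \<forall>s\<in>{0..<T}. (\<Sum>j\<in>nb k. w s j k) = C"
  proof (rule has_derivative_zero_constant)
    fix s assume s: "s \<in> {0..<T}"
    have "((\<lambda>s. \<Sum>j\<in>nb k. w s j k) has_real_derivative (\<Sum>j\<in>nb k. w_dot s j k)) (at s within {0..<T})"
      by (rule DERIV_sum) (use w_has_derivative[OF s] nb_sym in auto)
    moreover have "(\<Sum>j\<in>nb k. w_dot s j k) = 0"
      unfolding w_dot_def using sum_sum_antisym_eq_0[OF A_sym, where S="nb k" and h="\<lambda>j. g s j k"] by (simp add: sum_negf)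
    moreover have "(*) (0::real) = (\<lambda>h. 0)" by auto
    ultimately show "((\<lambda>s. \<Sum>j\<in>nb k. w s j k) has_derivative (\<lambda>h. 0)) (at s within {0..<T})"
      by (simp add: has_field_derivative_def)
  qed simp
  then obtain C where C: "\<forall>s\<in>{0..<T}. (\<Sum>j\<in>nb k. w s j k) = C" by blast
  have "0 \<in> {0..<T}" using t by auto
  hence "C = (\<Sum>j\<in>nb k. w 0 j k)" using C by simp
  also have "\<dots> = 0" using w_0 nb_sym by simp
  finally show ?thesis using C t by simp
qed

lemma sum_g: "t \<in> {0..<T} \<Longrightarrow> (\<Sum>j\<in>nb k. g t j k) = P (x t) $ k"
  unfolding g_eq sum.distrib using sum_w_eq_0 P_nth by simp

text \<open>\<open>dev t j k\<close> is the deviation of agent \<open>j\<close>'s estimate of \<open>\<partial>f/\<partial>x\<^sub>k\<close> from the mean over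
  \<open>nb k\<close>; since the \<open>w\<close> sum to zero, that mean is \<open>P (x t) $ k / nk k\<close>.\<close>

definition dev where "dev t j k = g t j k - (\<Sum>l\<in>nb k. g t l k) / nk k"

lemma sum_dev: "(\<Sum>j\<in>nb k. dev t j k) = 0"
  unfolding dev_def using nk_pos[of k] by (simp add: sum_subtractf nk_def)

lemma dev_singleton: "c k = j0 \<Longrightarrow> dev t k k = 0"
  unfolding dev_def nk_def using nb_singleton_coalition by simp

lemma g_diag_eq: "t \<in> {0..<T} \<Longrightarrow> g t a a = dev t a a + P (x t) $ a / nk a"
  unfolding dev_def using sum_g by simp

definition dev_dot where "dev_dot t j k = g_dot t j k - (\<Sum>l\<in>nb k. g_dot t l k) / nk k"

lemma dev_has_derivative: assumes "t \<in> {0..<T}" "j \<in> nb k"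
  shows "((\<lambda>s. dev s j k) has_real_derivative dev_dot t j k) (at t within {0..<T})"
  unfolding dev_def[abs_def] dev_dot_def
  by (intro DERIV_diff DERIV_cdivide g_has_derivative DERIV_sum) (use assms nb_sym nk_pos[of k] in auto)

definition U where "U t = (\<Sum>k\<in>UNIV. \<Sum>j\<in>nb k. (dev t j k)\<^sup>2)"
definition U_dot where "U_dot t = (\<Sum>k\<in>UNIV. \<Sum>j\<in>nb k. 2 * dev t j k * dev_dot t j k)"

lemma U_has_derivative: assumes "t \<in> {0..<T}" shows "(U has_real_derivative U_dot t) (at t within {0..<T})"
  unfolding U_def[abs_def] U_dot_def
proof (intro DERIV_sum)
  fix k j assume j: "j \<in> nb k"
  show "((\<lambda>s. (dev s j k)\<^sup>2) has_real_derivative 2 * dev t j k * dev_dot t j k) (at t within {0..<T})"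
    by (rule DERIV_cong[OF DERIV_power[OF dev_has_derivative[OF assms j], of 2]]) (simp add: power2_eq_square algebra_simps)
qed

definition V where "V t = (\<Sum>a\<in>UNIV. wt a * (x t $ a - xs $ a)\<^sup>2)"
definition V_dot where "V_dot t = (\<Sum>a\<in>UNIV. wt a * (2 * (x t $ a - xs $ a) * x_dot t $ a))"

lemma V_has_derivative: assumes "t \<in> {0..<T}" shows "(V has_real_derivative V_dot t) (at t within {0..<T})"
  unfolding V_def[abs_def] V_dot_def
proof (intro DERIV_sum DERIV_cmult)
  fix a
  show "((\<lambda>s. (x s $ a - xs $ a)\<^sup>2) has_real_derivative 2 * (x t $ a - xs $ a) * x_dot t $ a) (at t within {0..<T})"
    by (rule DERIV_cong[OF DERIV_power[where n=2, OF DERIV_diff[OF x_nth_has_derivative[OF assms] DERIV_const]]])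
       (simp add: power2_eq_square algebra_simps)
qed

lemma U_nonneg: "0 \<le> U t" unfolding U_def by (intro sum_nonneg) auto

lemma U_dot_eq: "U_dot t = (\<Sum>k\<in>UNIV. \<Sum>j\<in>nb k. 2 * dev t j k * g_dot t j k)"
proof -
  have "(\<Sum>j\<in>nb k. 2 * dev t j k * dev_dot t j k) = (\<Sum>j\<in>nb k. 2 * dev t j k * g_dot t j k)" for k
  proof -
    define M where "M = (\<Sum>l\<in>nb k. g_dot t l k) / nk k"
    have "(\<Sum>j\<in>nb k. 2 * dev t j k * dev_dot t j k) = (\<Sum>j\<in>nb k. 2 * dev t j k * g_dot t j k - 2 * M * dev t j k)"
      unfolding dev_dot_def M_def[symmetric] by (intro sum.cong) (auto simp: algebra_simps)
    also have "\<dots> = (\<Sum>j\<in>nb k. 2 * dev t j k * g_dot t j k) - 2 * M * (\<Sum>j\<in>nb k. dev t j k)"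
      by (simp add: sum_subtractf sum_distrib_left)
    finally have "(\<Sum>j\<in>nb k. 2 * dev t j k * dev_dot t j k) = (\<Sum>j\<in>nb k. 2 * dev t j k * g_dot t j k)
           - 2 * M * (\<Sum>j\<in>nb k. dev t j k)" .
    thus ?thesis using sum_dev by simp
  qed
  thus ?thesis unfolding U_dot_def by simp
qed

lemma w_dot_eq_dev: "w_dot t j k = - (\<Sum>l\<in>nb k. A j l * (dev t j k - dev t l k))"
  unfolding w_dot_def dev_def by simp

lemma U_dot_le: "U_dot t \<le> - lam * U t + (\<Sum>k\<in>UNIV. \<Sum>j\<in>nb k. 2 * dev t j k * hess_term t j k)"
proof -
  have "(\<Sum>j\<in>nb k. 2 * dev t j k * g_dot t j k) \<le> - lam * (\<Sum>j\<in>nb k. (dev t j k)\<^sup>2) + (\<Sum>j\<in>nb k. 2 * dev t j k * hess_term t j k)" for k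
  proof -
    have "(\<Sum>j\<in>nb k. 2 * dev t j k * g_dot t j k) = - (2 * (\<Sum>j\<in>nb k. dev t j k * (\<Sum>l\<in>nb k. A j l * (dev t j k - dev t l k)))) + (\<Sum>j\<in>nb k. 2 * dev t j k * hess_term t j k)"
    proof -
      have "(\<Sum>j\<in>nb k. 2 * dev t j k * g_dot t j k) = (\<Sum>j\<in>nb k. - (2 * (dev t j k * (\<Sum>l\<in>nb k. A j l * (dev t j k - dev t l k)))) + 2 * dev t j k * hess_term t j k)"
        unfolding g_dot_def w_dot_eq_dev by (intro sum.cong) (auto simp: algebra_simps)
      also have "\<dots> = - (2 * (\<Sum>j\<in>nb k. dev t j k * (\<Sum>l\<in>nb k. A j l * (dev t j k - dev t l k)))) + (\<Sum>j\<in>nb k. 2 * dev t j k * hess_term t j k)"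
        by (simp add: sum.distrib sum_negf sum_distrib_left sum_subtractf)
      finally show ?thesis .
    qed
    also have "2 * (\<Sum>j\<in>nb k. dev t j k * (\<Sum>l\<in>nb k. A j l * (dev t j k - dev t l k))) = (\<Sum>j\<in>nb k. \<Sum>l\<in>nb k. A j l * (dev t j k - dev t l k)\<^sup>2)"
      using laplacian_quadratic_form[OF A_sym, where S="nb k" and D="\<lambda>j. dev t j k"] by simp
    also have "lam * (\<Sum>j\<in>nb k. (dev t j k)\<^sup>2) \<le> \<dots>" by (rule lam_gap[OF sum_dev])
    ultimately show ?thesis by linarith
  qed
  hence "U_dot t \<le> (\<Sum>k\<in>UNIV. - lam * (\<Sum>j\<in>nb k. (dev t j k)\<^sup>2) + (\<Sum>j\<in>nb k. 2 * dev t j k * hess_term t j k))"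
    unfolding U_dot_eq by (intro sum_mono) auto
  thus ?thesis unfolding U_def by (simp add: sum.distrib sum_distrib_left)
qed

lemma V_dot_eq: assumes "t \<in> {0..<T}"
  shows "V_dot t = - 2 * \<delta> * ((x t - xs) \<bullet> P (x t)) - (\<Sum>a\<in>UNIV. 2 * dev t a a * (\<delta> * nk a * (x t $ a - xs $ a)))"
proof -
  have "wt a * (2 * (x t $ a - xs $ a) * x_dot t $ a) = - 2 * \<delta> * ((x t $ a - xs $ a) * P (x t) $ a) - 2 * dev t a a * (\<delta> * nk a * (x t $ a - xs $ a))" for a
  proof -
    have xa: "x_dot t $ a = -(\<delta> * dbar a) * g t a a" by (simp add: x_dot_def)
    have w: "wt a * dbar a = nk a" unfolding wt_def using dbar_pos[rule_format, of a] by simp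
    have ng: "nk a * g t a a = nk a * dev t a a + P (x t) $ a" using g_diag_eq[OF assms, of a] nk_pos[of a] by (simp add: field_simps)
    have "wt a * (2 * (x t $ a - xs $ a) * x_dot t $ a) = - 2 * \<delta> * (x t $ a - xs $ a) * ((wt a * dbar a) * g t a a)"
      unfolding xa by (simp add: algebra_simps)
    also have "\<dots> = - 2 * \<delta> * (x t $ a - xs $ a) * (nk a * g t a a)" by (simp add: w)
    also have "\<dots> = - 2 * \<delta> * (x t $ a - xs $ a) * (nk a * dev t a a + P (x t) $ a)" by (simp add: ng)
    finally show ?thesis by (simp add: algebra_simps)
  qed
  hence "V_dot t = (\<Sum>a\<in>UNIV. - 2 * \<delta> * ((x t $ a - xs $ a) * P (x t) $ a) - 2 * dev t a a * (\<delta> * nk a * (x t $ a - xs $ a)))"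
    unfolding V_dot_def by simp
  also have "\<dots> = - 2 * \<delta> * (\<Sum>a\<in>UNIV. (x t $ a - xs $ a) * P (x t) $ a) - (\<Sum>a\<in>UNIV. 2 * dev t a a * (\<delta> * nk a * (x t $ a - xs $ a)))"
    by (simp add: sum_subtractf sum_distrib_left)
  also have "(\<Sum>a\<in>UNIV. (x t $ a - xs $ a) * P (x t) $ a) = (x t - xs) \<bullet> P (x t)"
    by (simp add: inner_vec_def)
  finally show ?thesis .
qed

lemma sum_diag_dev_sq_le_U: "(\<Sum>a\<in>UNIV. (dev t a a)\<^sup>2) \<le> U t"
  unfolding U_def
  by (intro sum_mono member_le_sum) (auto simp: nb_self)

lemma W_dot_le_raw: assumes "t \<in> {0..<T}"
  shows "V_dot t + U_dot t \<le> - 2 * \<delta> * ((x t - xs) \<bullet> P (x t)) - (lam/4) * U t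
     + (4/lam) * \<delta>\<^sup>2 * (\<Sum>a\<in>UNIV. (nk a * (x t $ a - xs $ a))\<^sup>2) + (2/lam) * (\<Sum>k\<in>UNIV. \<Sum>j\<in>nb k. (hess_term t j k)\<^sup>2)"
proof -
  have l4: "lam/4 > 0" using lam_pos by simp
  have l2: "lam/2 > 0" using lam_pos by simp
  have "- (\<Sum>a\<in>UNIV. 2 * dev t a a * (\<delta> * nk a * (x t $ a - xs $ a))) \<le>
        (\<Sum>a\<in>UNIV. (lam/4) * (dev t a a)\<^sup>2 + (\<delta> * nk a * (x t $ a - xs $ a))\<^sup>2 / (lam/4))"
    unfolding sum_negf[symmetric]
    by (intro sum_mono) (use two_mult_le_weighted_squares[OF l4, of "dev t _ _" "- (\<delta> * nk _ * (x t $ _ - xs $ _))"] in \<open>auto simp: power2_eq_square\<close>)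
  also have "\<dots> = (\<Sum>a\<in>UNIV. (lam/4) * (dev t a a)\<^sup>2) + (\<Sum>a\<in>UNIV. (4/lam) * \<delta>\<^sup>2 * (nk a * (x t $ a - xs $ a))\<^sup>2)"
  proof -
    have pt: "(\<delta> * nk a * (x t $ a - xs $ a))\<^sup>2 / (lam/4) = (4/lam) * \<delta>\<^sup>2 * (nk a * (x t $ a - xs $ a))\<^sup>2" for a
      using lam_pos by (simp add: power_mult_distrib[symmetric] mult.assoc)
    show ?thesis by (simp only: pt sum.distrib)
  qed
  also have "\<dots> = (lam/4) * (\<Sum>a\<in>UNIV. (dev t a a)\<^sup>2) + (4/lam) * \<delta>\<^sup>2 * (\<Sum>a\<in>UNIV. (nk a * (x t $ a - xs $ a))\<^sup>2)"
    by (simp only: sum_distrib_left)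
  also have "\<dots> \<le> (lam/4) * U t + (4/lam) * \<delta>\<^sup>2 * (\<Sum>a\<in>UNIV. (nk a * (x t $ a - xs $ a))\<^sup>2)"
    using sum_diag_dev_sq_le_U[of t] lam_pos by simp
  finally have V1: "V_dot t \<le> - 2 * \<delta> * ((x t - xs) \<bullet> P (x t)) + (lam/4) * U t + (4/lam) * \<delta>\<^sup>2 * (\<Sum>a\<in>UNIV. (nk a * (x t $ a - xs $ a))\<^sup>2)"
    unfolding V_dot_eq[OF assms] by linarith
  have "(\<Sum>k\<in>UNIV. \<Sum>j\<in>nb k. 2 * dev t j k * hess_term t j k) \<le> (\<Sum>k\<in>UNIV. \<Sum>j\<in>nb k. (lam/2) * (dev t j k)\<^sup>2 + (hess_term t j k)\<^sup>2 / (lam/2))"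
    by (intro sum_mono two_mult_le_weighted_squares[OF l2])
  also have "\<dots> = (\<Sum>k\<in>UNIV. \<Sum>j\<in>nb k. (lam/2) * (dev t j k)\<^sup>2) + (\<Sum>k\<in>UNIV. \<Sum>j\<in>nb k. (2/lam) * (hess_term t j k)\<^sup>2)"
  proof -
    have pt: "h / (lam/2) = (2/lam) * h" for h using lam_pos by simp
    show ?thesis by (simp only: pt sum.distrib)
  qed
  also have "\<dots> = (lam/2) * U t + (2/lam) * (\<Sum>k\<in>UNIV. \<Sum>j\<in>nb k. (hess_term t j k)\<^sup>2)"
    unfolding U_def by (simp only: sum_distrib_left)
  finally have U1: "U_dot t \<le> - lam * U t + (lam/2) * U t + (2/lam) * (\<Sum>k\<in>UNIV. \<Sum>j\<in>nb k. (hess_term t j k)\<^sup>2)"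
    using U_dot_le[of t] by linarith
  show ?thesis using V1 U1 by linarith
qed

definition W where "W t = V t + U t"
definition W_dot where "W_dot t = V_dot t + U_dot t"

lemma W_has_derivative: "t \<in> {0..<T} \<Longrightarrow> (W has_real_derivative W_dot t) (at t within {0..<T})"
  unfolding W_def[abs_def] W_dot_def by (intro DERIV_add V_has_derivative U_has_derivative)

lemma V_eq_weighted_sq: "V t = OS.weighted_sq (x t - xs)" unfolding V_def OS.weighted_sq_def by simp

lemma W_nonneg: "0 \<le> W t" unfolding W_def V_eq_weighted_sq using OS.weighted_sq_nonneg U_nonneg by (simp add: add_nonneg_nonneg)

lemma norm_error_sq_le: assumes "W t \<le> Rb" shows "(norm (x t - xs))\<^sup>2 \<le> Rb / OS.wmin"
proof -
  have "OS.wmin * (norm (x t - xs))\<^sup>2 \<le> Rb" using OS.weighted_sq_ge[of "x t - xs"] assms U_nonneg[of t]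
    unfolding W_def V_eq_weighted_sq by linarith
  thus ?thesis using OS.wmin_pos by (simp add: field_simps)
qed

lemma x_in_cball: assumes "W t \<le> Rb" shows "x t \<in> cball xs (radius Rb)"
  using norm_error_sq_le[OF assms] unfolding radius_def mem_cball dist_norm
  by (metis norm_minus_commute real_le_rsqrt)

lemma U_le_of_W_le: "W t \<le> Rb \<Longrightarrow> U t \<le> Rb" unfolding W_def V_eq_weighted_sq using OS.weighted_sq_nonneg[of "x t - xs"] by linarith

lemma dev_diag_sq_le_U: "(dev t a a)\<^sup>2 \<le> U t"
  using sum_diag_dev_sq_le_U[of t] member_le_sum[of a UNIV "\<lambda>a. (dev t a a)\<^sup>2"] by simp

lemma g_diag_bound: assumes t: "t \<in> {0..<T}" and Wb: "W t \<le> Rb"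
  shows "\<bar>g t a a\<bar> \<le> 1 + Rb + P_bound Rb"
proof -
  have "\<bar>dev t a a\<bar> \<le> 1 + Rb" using abs_le_1_plus_sq[of "dev t a a"] dev_diag_sq_le_U[of t a] U_le_of_W_le[OF Wb] by linarith
  moreover have "\<bar>P (x t) $ a / nk a\<bar> \<le> P_bound Rb"
  proof -
    have "\<bar>P (x t) $ a / nk a\<bar> \<le> \<bar>P (x t) $ a\<bar>" using nk_ge1[of a]
      by (simp add: abs_div divide_le_eq_1 mult_le_cancel_left1 divide_le_eq)
    also have "\<dots> \<le> norm (P (x t))" by (rule component_le_norm_cart)
    also have "\<dots> \<le> P_bound Rb" by (rule P_bound(2)[OF x_in_cball[OF Wb]])
    finally show ?thesis .
  qed
  ultimately show ?thesis unfolding g_diag_eq[OF t] by linarith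
qed

lemma x_dot_bound: assumes t: "t \<in> {0..<T}" and Wb: "W t \<le> Rb"
  shows "norm (x_dot t) \<le> \<delta> * drift_bound Rb"
proof -
  have "norm (x_dot t) \<le> (\<Sum>a\<in>UNIV. \<bar>x_dot t $ a\<bar>)" by (rule norm_le_l1_cart)
  also have "\<dots> \<le> (\<Sum>a\<in>UNIV. \<delta> * (dbar a * (1 + Rb + P_bound Rb)))"
  proof (rule sum_mono)
    fix a
    have "\<bar>x_dot t $ a\<bar> = \<delta> * dbar a * \<bar>g t a a\<bar>" unfolding x_dot_def using dpos dbar_pos[rule_format, of a]
      by (simp add: abs_mult)
    also have "\<dots> \<le> \<delta> * dbar a * (1 + Rb + P_bound Rb)"
      using g_diag_bound[OF t Wb, of a] dpos dbar_pos by (intro mult_left_mono) (auto simp: less_imp_le)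
    finally show "\<bar>x_dot t $ a\<bar> \<le> \<delta> * (dbar a * (1 + Rb + P_bound Rb))" by simp
  qed
  also have "\<dots> = \<delta> * drift_bound Rb" unfolding drift_bound_def by (simp add: sum_distrib_left)
  finally show ?thesis .
qed

lemma hess_term_bound: assumes t: "t \<in> {0..<T}" and Wb: "W t \<le> Rb"
  shows "\<bar>hess_term t j k\<bar> \<le> D2f_bound Rb * (\<delta> * drift_bound Rb)"
proof -
  have "\<bar>hess_term t j k\<bar> \<le> norm (blinfun_apply (D2f j (x t)) (x_dot t)) * norm (axis k (1::real) :: real^'a)"
    unfolding hess_term_def using norm_blinfun[of "blinfun_apply (D2f j (x t)) (x_dot t)" "axis k 1"] by simp
  also have "\<dots> = norm (blinfun_apply (D2f j (x t)) (x_dot t))" by simp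
  also have "\<dots> \<le> norm (D2f j (x t)) * norm (x_dot t)" by (rule norm_blinfun)
  also have "\<dots> \<le> D2f_bound Rb * (\<delta> * drift_bound Rb)"
    using D2f_bound(2)[OF x_in_cball[OF Wb], of j] x_dot_bound[OF t Wb] D2f_bound(1) by (intro mult_mono) auto
  finally show ?thesis .
qed

lemma card_nb_le: "real (card (nb k)) \<le> n_agents" unfolding n_agents_def by (simp add: card_mono)

lemma sum_hess_term_sq_le: assumes t: "t \<in> {0..<T}" and Wb: "W t \<le> Rb"
  shows "(\<Sum>k\<in>UNIV. \<Sum>j\<in>nb k. (hess_term t j k)\<^sup>2) \<le> n_agents\<^sup>2 * (D2f_bound Rb * (\<delta> * drift_bound Rb))\<^sup>2"
proof -
  define B where "B = (D2f_bound Rb * (\<delta> * drift_bound Rb))\<^sup>2"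
  have "(\<Sum>k\<in>UNIV. \<Sum>j\<in>nb k. (hess_term t j k)\<^sup>2) \<le> (\<Sum>k\<in>UNIV. \<Sum>j\<in>nb k. B)"
    unfolding B_def using hess_term_bound[OF t Wb]
    by (intro sum_mono) (metis abs_ge_zero power_mono power2_abs)
  also have "\<dots> = (\<Sum>k\<in>UNIV. real (card (nb k)) * B)" by simp
  also have "\<dots> \<le> (\<Sum>k\<in>(UNIV::'a set). n_agents * B)"
    by (rule sum_mono, rule mult_right_mono[OF card_nb_le]) (simp add: B_def)
  also have "\<dots> = n_agents\<^sup>2 * B" unfolding n_agents_def by (simp add: power2_eq_square)
  finally show ?thesis unfolding B_def .
qed

lemma sum_scaled_error_sq_le: assumes Wb: "W t \<le> Rb"
  shows "(\<Sum>a\<in>UNIV. (nk a * (x t $ a - xs $ a))\<^sup>2) \<le> n_agents\<^sup>2 * (Rb / OS.wmin)"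
proof -
  have "(\<Sum>a\<in>UNIV. (nk a * (x t $ a - xs $ a))\<^sup>2) \<le> (\<Sum>a\<in>UNIV. n_agents\<^sup>2 * ((x t - xs) $ a)\<^sup>2)"
  proof (rule sum_mono)
    fix a
    have "(nk a)\<^sup>2 \<le> n_agents\<^sup>2" using nk_le[of a] nk_pos[of a] unfolding n_agents_def by (intro power_mono) auto
    thus "(nk a * (x t $ a - xs $ a))\<^sup>2 \<le> n_agents\<^sup>2 * ((x t - xs) $ a)\<^sup>2"
      by (simp add: power_mult_distrib mult_right_mono)
  qed
  also have "\<dots> = n_agents\<^sup>2 * (norm (x t - xs))\<^sup>2" unfolding norm_power2_cart by (simp add: sum_distrib_left)
  also have "\<dots> \<le> n_agents\<^sup>2 * (Rb / OS.wmin)" using norm_error_sq_le[OF Wb] by (intro mult_left_mono) auto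
  finally show ?thesis .
qed

lemma W_dot_bound: assumes t: "t \<in> {0..<T}" and Wb: "W t \<le> Rb"
  shows "W_dot t \<le> - \<delta> * OS.dissipation (x t - xs) (U t) + \<delta>\<^sup>2 * perturbation_bound Rb"
proof -
  have a: "(4/lam) * \<delta>\<^sup>2 * (\<Sum>a\<in>UNIV. (nk a * (x t $ a - xs $ a))\<^sup>2) \<le> (4/lam) * \<delta>\<^sup>2 * (n_agents\<^sup>2 * (Rb / OS.wmin))"
    using sum_scaled_error_sq_le[OF Wb] lam_pos by (intro mult_left_mono) auto
  have b: "(2/lam) * (\<Sum>k\<in>UNIV. \<Sum>j\<in>nb k. (hess_term t j k)\<^sup>2) \<le> (2/lam) * (n_agents\<^sup>2 * (D2f_bound Rb * (\<delta> * drift_bound Rb))\<^sup>2)"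
    using sum_hess_term_sq_le[OF t Wb] lam_pos by (intro mult_left_mono) auto
  \<comment> \<open>consensus contracts \<open>U\<close> at a rate independent of \<open>\<delta>\<close>; \<open>\<delta> \<le> 1\<close> lets it match the \<open>\<delta>\<close>-scaled rate of \<open>V\<close>\<close>
  have c: "- (lam/4) * U t \<le> - \<delta> * ((lam/4) * U t)"
    using dle U_nonneg[of t] lam_pos mult_left_le_one_le[of "U t" \<delta>] dpos by simp
  have K: "(4/lam) * \<delta>\<^sup>2 * (n_agents\<^sup>2 * (Rb / OS.wmin)) + (2/lam) * (n_agents\<^sup>2 * (D2f_bound Rb * (\<delta> * drift_bound Rb))\<^sup>2) = \<delta>\<^sup>2 * perturbation_bound Rb"
    unfolding perturbation_bound_def by (simp add: power_mult_distrib algebra_simps)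
  have dissipation: "OS.dissipation (x t - xs) (U t) = 2 * ((x t - xs) \<bullet> P (x t)) + (lam/4) * U t"
    unfolding OS.dissipation_def by simp
  show ?thesis using W_dot_le_raw[OF t] a b c K unfolding W_dot_def dissipation by (simp add: algebra_simps)
qed

lemma chi_norm_eq: assumes t: "t \<in> {0..<T}"
  shows "chi_norm f c R j0 xs (w t) (x t) = sqrt (U t + (norm (x t - xs))\<^sup>2)"
proof -
  have inner: "(\<Sum>p<card (nb k) - 1. (Gbar f c R (w t) (x t) k p)\<^sup>2) = (\<Sum>j\<in>nb k. (dev t j k)\<^sup>2)" for k
  proof -
    have Rk: "\<forall>p < card (nb k) - 1. (\<Sum>j\<in>nb k. R k j p) = 0 \<and>
      (\<forall>q < card (nb k) - 1. (\<Sum>j\<in>nb k. R k j p * R k j q) = (if p = q then 1 else 0))"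
      using Rv unfolding valid_R_def by blast
    have G: "Gbar f c R (w t) (x t) k p = (\<Sum>j\<in>nb k. R k j p * dev t j k)" if p: "p < card (nb k) - 1" for p
    proof -
      define M where "M = (\<Sum>l\<in>nb k. g t l k) / nk k"
      have "(\<Sum>j\<in>nb k. R k j p * dev t j k) = (\<Sum>j\<in>nb k. R k j p * g t j k) - M * (\<Sum>j\<in>nb k. R k j p)"
        unfolding dev_def M_def[symmetric] by (simp add: algebra_simps sum_subtractf sum_distrib_left)
      also have "(\<Sum>j\<in>nb k. R k j p) = 0" using Rk p by blast
      finally show ?thesis unfolding Gbar_def g_def by simp
    qed
    have "(\<Sum>p<card (nb k) - 1. (Gbar f c R (w t) (x t) k p)\<^sup>2) = (\<Sum>p<card (nb k) - 1. (\<Sum>j\<in>nb k. R k j p * dev t j k)\<^sup>2)"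
      using G by simp
    also have "\<dots> = (\<Sum>j\<in>nb k. (dev t j k)\<^sup>2)"
      by (rule sum_sq_orthonormal_projections[where r="\<lambda>p j. R k j p"]) (use Rk sum_dev nb_ne in auto)
    finally show ?thesis .
  qed
  have "(\<Sum>k\<in>{k. c k \<noteq> j0}. \<Sum>p<card (nb k) - 1. (Gbar f c R (w t) (x t) k p)\<^sup>2) = (\<Sum>k\<in>{k. c k \<noteq> j0}. \<Sum>j\<in>nb k. (dev t j k)\<^sup>2)"
    using inner by simp
  also have "\<dots> = U t" unfolding U_def
  proof (rule sum.mono_neutral_left)
    show "\<forall>k\<in>UNIV - {k. c k \<noteq> j0}. (\<Sum>j\<in>nb k. (dev t j k)\<^sup>2) = 0"
      using nb_singleton_coalition dev_singleton by auto
  qed auto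
  finally show ?thesis unfolding chi_norm_def by simp
qed

lemma chi_norm_W_comparable: assumes t: "t \<in> {0..<T}"
  shows "(chi_norm f c R j0 xs (w t) (x t))\<^sup>2 \<le> W t / c0"
    and "W t \<le> c1 * (chi_norm f c R j0 xs (w t) (x t))\<^sup>2"
proof -
  have nn: "0 \<le> U t + (norm (x t - xs))\<^sup>2" using U_nonneg[of t] by simp
  have sq: "(chi_norm f c R j0 xs (w t) (x t))\<^sup>2 = U t + (norm (x t - xs))\<^sup>2"
    unfolding chi_norm_eq[OF t] using nn by simp
  have "c0 * (U t + (norm (x t - xs))\<^sup>2) \<le> W t"
  proof -
    have "c0 * U t \<le> U t" using U_nonneg[of t] mult_left_le_one_le[of "U t" c0] c0_pos unfolding c0_def by simp
    moreover have "c0 * (norm (x t - xs))\<^sup>2 \<le> V t"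
      using OS.weighted_sq_ge[of "x t - xs"] unfolding V_eq_weighted_sq c0_def
      by (meson min.cobounded1 mult_right_mono order_trans zero_le_power2)
    ultimately show ?thesis unfolding W_def by (simp add: algebra_simps)
  qed
  thus "(chi_norm f c R j0 xs (w t) (x t))\<^sup>2 \<le> W t / c0" unfolding sq using c0_pos by (simp add: field_simps)
  have "V t \<le> c1 * (norm (x t - xs))\<^sup>2"
    using weighted_sq_le[of "x t - xs"] unfolding V_eq_weighted_sq c1_def
    by (meson max.cobounded1 mult_right_mono order_trans zero_le_power2)
  moreover have "U t \<le> c1 * U t" using U_nonneg[of t] unfolding c1_def
    by (simp add: mult_le_cancel_right1)
  ultimately show "W t \<le> c1 * (chi_norm f c R j0 xs (w t) (x t))\<^sup>2"
    unfolding sq W_def by (simp add: algebra_simps)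
qed

lemma chi_norm_nonneg: "t \<in> {0..<T} \<Longrightarrow> 0 \<le> chi_norm f c R j0 xs (w t) (x t)"
  using chi_norm_eq U_nonneg by simp

lemma W_dot_le_rate:
  assumes s: "s \<in> {0..<T}" and W: "W s \<le> Rb" and small: "\<delta> * perturbation_bound Rb \<le> OS.rate (W s) / 2"
  shows "W_dot s \<le> - (\<delta>/2) * OS.rate (W s)"
proof -
  have "OS.rate (W s) \<le> OS.dissipation (x s - xs) (U s)"
    unfolding W_def V_eq_weighted_sq by (rule OS.rate_le_dissipation[OF U_nonneg])
  hence "\<delta> * OS.rate (W s) \<le> \<delta> * OS.dissipation (x s - xs) (U s)" using dpos by simp
  hence "W_dot s \<le> - \<delta> * OS.rate (W s) + \<delta> * (\<delta> * perturbation_bound Rb)"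
    using W_dot_bound[OF s W] by (simp add: power2_eq_square)
  also have "\<dots> \<le> - \<delta> * OS.rate (W s) + \<delta> * (OS.rate (W s) / 2)"
    using small dpos by (intro add_left_mono mult_left_mono) auto
  finally show ?thesis by simp
qed

text \<open>For \<open>\<delta>\<close> small the \<open>O(\<delta>\<^sup>2)\<close> perturbation caused by the motion of the actions is dominated by
  the dissipation outside the \<open>\<eta>\<close>-sublevel set, so the comparison principle applies to \<open>W\<close>.\<close>

lemma W_practical_decay:
  assumes eta: "0 < \<eta>" "\<eta> < Rb" and W_0: "W 0 < Rb" and t: "t \<in> {0..<T}"
    and small: "\<And>\<rho>. \<rho> \<in> {\<eta>..Rb} \<Longrightarrow> \<delta> * perturbation_bound Rb \<le> OS.rate \<rho> / 2"
  shows "W t \<le> max \<eta> (decay.H_inv (decay.H (W 0) * exp (- (\<delta>/2) * t)))"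
proof -
  interpret D: decaying_trajectory OS.rate W W_dot T "\<delta>/2" \<eta> Rb
  proof (intro decaying_trajectory.intro OS.decay_rate decaying_trajectory_axioms.intro)
    fix s assume "s \<in> {0..<T}" "\<eta> \<le> W s" "W s \<le> Rb"
    thus "W_dot s \<le> - (\<delta>/2) * OS.rate (W s)" using small by (intro W_dot_le_rate) auto
  qed (use W_has_derivative eta W_0 W_nonneg dpos in auto)
  show ?thesis by (rule D.comparison[OF t])
qed

lemma chi_norm_practical_bound:
  assumes t: "t \<in> {0..<T}" and "0 \<le> \<eta>"
    and Wt: "W t \<le> max \<eta> (decay.H_inv (decay.H (W 0) * exp (- (\<delta>/2) * t)))"
  shows "chi_norm f c R j0 xs (w t) (x t)
    \<le> decay.KL_bound c0 c1 (chi_norm f c R j0 xs (w 0) (x 0)) (\<delta> * t) + sqrt (\<eta> / c0)"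
proof -
  have t0: "0 \<in> {0..<T}" using t by simp
  define B where "B = decay.H_inv (decay.H (c1 * (chi_norm f c R j0 xs (w 0) (x 0))\<^sup>2) * exp (- (\<delta> * t) / 2))"
  have "0 \<le> B" unfolding B_def by (intro decay.H_inv_nonneg mult_nonneg_nonneg decay.H_nonneg) auto
  have "decay.H (W 0) \<le> decay.H (c1 * (chi_norm f c R j0 xs (w 0) (x 0))\<^sup>2)"
    using chi_norm_W_comparable(2)[OF t0] W_nonneg by (intro decay.H_mono) auto
  hence "decay.H (W 0) * exp (- (\<delta>/2) * t)
      \<le> decay.H (c1 * (chi_norm f c R j0 xs (w 0) (x 0))\<^sup>2) * exp (- (\<delta> * t) / 2)"
    by (simp add: mult_right_mono)
  hence "decay.H_inv (decay.H (W 0) * exp (- (\<delta>/2) * t)) \<le> B"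
    unfolding B_def by (intro decay.H_inv_mono mult_nonneg_nonneg decay.H_nonneg) auto
  hence "W t \<le> \<eta> + B" using Wt \<open>0 \<le> \<eta>\<close> \<open>0 \<le> B\<close> by linarith
  have "(chi_norm f c R j0 xs (w t) (x t))\<^sup>2 \<le> W t / c0" by (rule chi_norm_W_comparable(1)[OF t])
  also have "\<dots> \<le> (\<eta> + B) / c0" using \<open>W t \<le> \<eta> + B\<close> c0_pos by (simp add: divide_right_mono)
  finally have "(chi_norm f c R j0 xs (w t) (x t))\<^sup>2 \<le> B / c0 + \<eta> / c0"
    by (simp add: add_divide_distrib)
  hence "chi_norm f c R j0 xs (w t) (x t) \<le> sqrt (B / c0 + \<eta> / c0)"
    by (rule real_le_rsqrt)
  also have "\<dots> \<le> sqrt (B / c0) + sqrt (\<eta> / c0)"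
    using \<open>0 \<le> B\<close> \<open>0 \<le> \<eta>\<close> c0_pos by (intro sqrt_add_le_add_sqrt) auto
  finally show ?thesis unfolding B_def decay.KL_bound_def by simp
qed

lemma chi_norm_practical_stability_bound:
  assumes eta: "0 < \<eta>" "\<eta> < Rb" and init: "c1 * (chi_norm f c R j0 xs (w 0) (x 0))\<^sup>2 < Rb"
    and small: "\<And>\<rho>. \<rho> \<in> {\<eta>..Rb} \<Longrightarrow> \<delta> * perturbation_bound Rb \<le> OS.rate \<rho> / 2"
    and t: "t \<in> {0..<T}"
  shows "chi_norm f c R j0 xs (w t) (x t)
    \<le> decay.KL_bound c0 c1 (chi_norm f c R j0 xs (w 0) (x 0)) (\<delta> * t) + sqrt (\<eta> / c0)"
proof (rule chi_norm_practical_bound[OF t])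
  have "W 0 < Rb" using chi_norm_W_comparable(2)[of 0] t init by simp
  thus "W t \<le> max \<eta> (decay.H_inv (decay.H (W 0) * exp (- (\<delta>/2) * t)))"
    by (rule W_practical_decay[OF eta _ t small])
qed (use eta in simp)

end

context game begin

lemma gain_threshold:
  assumes "0 < \<eta>" "\<eta> \<le> Rb"
  shows "\<exists>\<delta>s>0. \<delta>s \<le> 1 \<and> (\<forall>\<delta>. 0 < \<delta> \<and> \<delta> < \<delta>s \<longrightarrow>
    (\<forall>\<rho>\<in>{\<eta>..Rb}. \<delta> * perturbation_bound Rb \<le> OS.rate \<rho> / 2))"
proof -
  obtain m where m: "m > 0" "\<forall>\<rho>\<in>{\<eta>..Rb}. m \<le> OS.rate \<rho>"
    using OS.rate_uniformly_pos[OF assms] by blast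
  have K: "perturbation_bound Rb \<ge> 0" using perturbation_bound_nonneg assms by simp
  define \<delta>s where "\<delta>s = min 1 (m / (2 * perturbation_bound Rb + 1))"
  have "\<delta> * perturbation_bound Rb \<le> OS.rate \<rho> / 2" if "0 < \<delta>" "\<delta> < \<delta>s" "\<rho> \<in> {\<eta>..Rb}" for \<delta> \<rho>
  proof -
    have "\<delta> * (2 * perturbation_bound Rb + 1) < m" using that K by (simp add: \<delta>s_def field_simps)
    moreover have "m \<le> OS.rate \<rho>" using m(2) that(3) by blast
    ultimately show ?thesis using that(1) K by (simp add: algebra_simps)
  qed
  moreover have "\<delta>s > 0" "\<delta>s \<le> 1" unfolding \<delta>s_def using m K by simp_all
  ultimately show ?thesis by blast
qed

theorem seeking_practical_stability:
  "\<exists>\<phi>. class_KL \<phi> \<and>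
    (\<forall>\<Delta>>0. \<forall>v>0. \<exists>\<delta>s>0. \<forall>\<delta>. 0 < \<delta> \<and> \<delta> < \<delta>s \<longrightarrow>
       (\<forall>T>0. \<forall>x w. seeking_solution f c A (\<lambda>a. \<delta> * dbar a) T x w \<and>
           chi_norm f c R j0 xs (w 0) (x 0) < \<Delta> \<longrightarrow>
           (\<forall>t\<in>{0..<T}. chi_norm f c R j0 xs (w t) (x t)
              \<le> \<phi> (chi_norm f c R j0 xs (w 0) (x 0)) (\<delta> * t) + v)))"
proof (intro exI[of _ "decay.KL_bound c0 c1"] conjI allI impI)
  show "class_KL (decay.KL_bound c0 c1)" by (rule decay.class_KL_KL_bound[OF c0_pos c1_pos])
  fix \<Delta> v :: real assume "\<Delta> > 0" "v > 0"
  define Rb where "Rb = c1 * \<Delta>\<^sup>2 + 1"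
  define \<eta> where "\<eta> = min (c0 * v\<^sup>2) (Rb / 2)"
  have "Rb > 0" unfolding Rb_def using c1_pos by (simp add: add_nonneg_pos)
  hence eta: "0 < \<eta>" "\<eta> < Rb" unfolding \<eta>_def using c0_pos \<open>v > 0\<close> by auto
  have "\<eta> / c0 \<le> v\<^sup>2" unfolding \<eta>_def using c0_pos by (simp add: field_simps)
  hence small_eta: "sqrt (\<eta> / c0) \<le> v" using \<open>v > 0\<close> by (metis real_sqrt_le_mono real_sqrt_abs abs_of_pos)
  obtain \<delta>s where \<delta>s: "\<delta>s > 0" "\<delta>s \<le> 1"
    "\<And>\<delta> \<rho>. 0 < \<delta> \<Longrightarrow> \<delta> < \<delta>s \<Longrightarrow> \<rho> \<in> {\<eta>..Rb} \<Longrightarrow> \<delta> * perturbation_bound Rb \<le> OS.rate \<rho> / 2"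
    using gain_threshold[of \<eta> Rb] eta by auto
  show "\<exists>\<delta>s>0. \<forall>\<delta>. 0 < \<delta> \<and> \<delta> < \<delta>s \<longrightarrow>
       (\<forall>T>0. \<forall>x w. seeking_solution f c A (\<lambda>a. \<delta> * dbar a) T x w \<and>
           chi_norm f c R j0 xs (w 0) (x 0) < \<Delta> \<longrightarrow>
           (\<forall>t\<in>{0..<T}. chi_norm f c R j0 xs (w t) (x t)
              \<le> decay.KL_bound c0 c1 (chi_norm f c R j0 xs (w 0) (x 0)) (\<delta> * t) + v))"
  proof (intro exI[of _ \<delta>s] conjI allI impI ballI \<delta>s(1))
    fix \<delta> T x w t
    assume \<delta>: "0 < \<delta> \<and> \<delta> < \<delta>s" and "T > 0"
      and init: "seeking_solution f c A (\<lambda>a. \<delta> * dbar a) T x w \<and> chi_norm f c R j0 xs (w 0) (x 0) < \<Delta>"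
      and t: "t \<in> {0..<T}"
    interpret traj N j0 c f A dbar xs R Df D2f \<delta> T x w
      by unfold_locales (use init \<delta> \<delta>s(2) in auto)
    have "(chi_norm f c R j0 xs (w 0) (x 0))\<^sup>2 < \<Delta>\<^sup>2"
      using init chi_norm_nonneg[of 0] \<open>T > 0\<close> by (simp add: power_strict_mono)
    hence "c1 * (chi_norm f c R j0 xs (w 0) (x 0))\<^sup>2 < c1 * \<Delta>\<^sup>2" using c1_pos by simp
    hence "c1 * (chi_norm f c R j0 xs (w 0) (x 0))\<^sup>2 < Rb" unfolding Rb_def by simp
    from chi_norm_practical_stability_bound[OF eta this \<delta>s(3) t] \<delta> small_eta
    show "chi_norm f c R j0 xs (w t) (x t)
      \<le> decay.KL_bound c0 c1 (chi_norm f c R j0 xs (w 0) (x 0)) (\<delta> * t) + v" by fastforce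
  qed
qed

end

lemma C2_fun_derivatives:
  assumes "\<forall>a. C2_fun (f a)"
  obtains Df D2f where "\<And>a x. (f a has_derivative blinfun_apply (Df a x)) (at x)"
    "\<And>a x. (Df a has_derivative blinfun_apply (D2f a x)) (at x)" "\<And>a. continuous_on UNIV (D2f a)"
proof -
  have "\<forall>a. \<exists>p. (\<forall>x. (f a has_derivative blinfun_apply (fst p x)) (at x)) \<and>
      (\<forall>x. (fst p has_derivative blinfun_apply (snd p x)) (at x)) \<and> continuous_on UNIV (snd p)"
  proof
    fix a
    obtain Dg D2g where "\<forall>x. (f a has_derivative blinfun_apply (Dg x)) (at x)"
      "\<forall>x. (Dg has_derivative blinfun_apply (D2g x)) (at x)" "continuous_on UNIV D2g"
      using assms unfolding C2_fun_def by blast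
    thus "\<exists>p. (\<forall>x. (f a has_derivative blinfun_apply (fst p x)) (at x)) \<and>
      (\<forall>x. (fst p has_derivative blinfun_apply (snd p x)) (at x)) \<and> continuous_on UNIV (snd p)"
      by (intro exI[of _ "(Dg, D2g)"]) simp
  qed
  from choice[OF this] obtain F where "\<forall>a. (\<forall>x. (f a has_derivative blinfun_apply (fst (F a) x)) (at x)) \<and>
      (\<forall>x. (fst (F a) has_derivative blinfun_apply (snd (F a) x)) (at x)) \<and> continuous_on UNIV (snd (F a))"
    by blast
  thus thesis using that[of "\<lambda>a. fst (F a)" "\<lambda>a. snd (F a)"] by blast
qed

text \<open>Only the connectivity of the communication graphs, the symmetry and nonnegativity of the
  weights and \<open>m\<^sub>j\<^sub>0 = 1\<close> enter the proof.\<close>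

theorem corollary1:
  fixes N :: nat and j0 :: nat and c :: "'a::finite \<Rightarrow> nat"
    and f :: "'a \<Rightarrow> real^'a \<Rightarrow> real" and A :: "'a \<Rightarrow> 'a \<Rightarrow> real"
    and dbar :: "'a \<Rightarrow> real" and xs :: "real^'a" and R :: "'a \<Rightarrow> 'a \<Rightarrow> nat \<Rightarrow> real"
  assumes N2: "N \<ge> 2"
    and coal: "\<forall>a. c a < N" and nonempty: "\<forall>i<N. \<exists>a. c a = i"
    and j0: "j0 < N" and mj0: "card {a. c a = j0} = 1"
    and mi: "\<forall>i<N. i \<noteq> j0 \<longrightarrow> card {a. c a = i} \<ge> 2"
    and A1: "\<forall>a. C2_fun (f a)"
    and A2: "\<forall>x y. x \<noteq> y \<longrightarrow> (x - y) \<bullet> (pseudo_gradient f c x - pseudo_gradient f c y) > 0"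
    and NE: "is_NE N f c xs"
    and A_sym: "\<forall>a b. A a b = A b a" and A_nonneg: "\<forall>a b. A a b \<ge> 0" and A_diag: "\<forall>a. A a a = 0"
    and GI_conn: "\<forall>i<N. i \<noteq> j0 \<longrightarrow> graph_connected {a. c a = i} (interf f c)"
    and GC_conn: "\<forall>k. c k \<noteq> j0 \<longrightarrow> graph_connected (nbhd f c k) (\<lambda>u v. A u v > 0)"
    and dbar_pos: "\<forall>a. dbar a > 0"
    and R: "valid_R f c R"
  shows "\<exists>\<phi>. class_KL \<phi> \<and>
    (\<forall>\<Delta>>0. \<forall>v>0. \<exists>\<delta>s>0. \<forall>\<delta>. 0 < \<delta> \<and> \<delta> < \<delta>s \<longrightarrow>
       (\<forall>T>0. \<forall>x w. seeking_solution f c A (\<lambda>a. \<delta> * dbar a) T x w \<and>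
           chi_norm f c R j0 xs (w 0) (x 0) < \<Delta> \<longrightarrow>
           (\<forall>t\<in>{0..<T}. chi_norm f c R j0 xs (w t) (x t)
              \<le> \<phi> (chi_norm f c R j0 xs (w 0) (x 0)) (\<delta> * t) + v)))"
proof -
  obtain Df D2f where Df: "\<And>a x. (f a has_derivative blinfun_apply (Df a x)) (at x)"
    and D2f: "\<And>a x. (Df a has_derivative blinfun_apply (D2f a x)) (at x)"
    and D2f_cont: "\<And>a. continuous_on UNIV (D2f a)"
    using C2_fun_derivatives[OF A1] by blast
  interpret game N j0 c f A dbar xs R Df D2f
    by unfold_locales (fact Df D2f D2f_cont coal mj0 A2 NE A_sym A_nonneg GC_conn dbar_pos R)+
  show ?thesis by (rule seeking_practical_stability)
qed

end
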